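(* Let $v$, $V$ be as in the context, $f=v-V$, and assume $(H1')_\delta$ with $0<\delta<1/(2p)$. Let $\overline c_p>0$ be a constant depending only on $p$ such that $\frac{p+1}{2(1+\overline c_p\delta)^2}\mathsf{E}[f(t)]\le\mathcal{E}[v(t)]\le\frac{p+1}{2}(1+\overline c_p\delta)^2\mathsf{E}[f(t)]$ for all $t\ge t_0$. Then for each $k,j$ there is a constant $\widetilde c_{k,j,p}>0$ such that for all $t\ge t_0$ $$\frac{\sqrt2\,p}{\sqrt{p+1}\,(1+\overline c_p\delta)}\mathsf{Q}_{k,j}[f(t)]-\widetilde c_{k,j,p}\mathsf{E}[f(t)]^{1/2}\le\mathcal{Q}_{k,j}[v(t)]\le\frac{\sqrt2\,p}{\sqrt{p+1}}(1+\overline c_p\delta)\mathsf{Q}_{k,j}[f(t)]+\widetilde c_{k,j,p}\mathsf{E}[f(t)]^{1/2}.$$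
   Context: Let $N\ge1$, let $\Omega\subset\mathbb{R}^N$ be a bounded domain with $C^{2,\alpha}$ boundary, $m\in(\frac{(N-2)_+}{N+2},1)$, $p=1/m$. Let $u\ge0$ solve $u_\tau=\Delta u^m$ in $(0,\infty)\times\Omega$, $u=0$ on $\partial\Omega$, $u(0)=u_0$ with $0\le u_0\in L^q(\Omega)$, $q\ge1$, $q>N(1-m)/2$ if $m<(N-2)/N$; $T>0$ its extinction time, $\mathsf{c}=\frac{1}{(1-m)T}$, $w(t,x)=e^{\mathsf{c}t}u(T-Te^{-t/T},x)$, $v=w^m$ (so $\partial_tv^p=\Delta v+\mathsf{c}v^p$, $v=0$ on $\partial\Omega$). $S$ is the positive classical solution of $-\Delta S^m=\mathsf{c}S$, $S=0$ on $\partial\Omega$, with $w(t)\to S$ uniformly; $V=S^m$, so $-\Delta V=\mathsf{c}V^p$. $(H1')_\delta$: there is $t_0$ with $|v-V|\le\delta V$ a.e. on $[t_0,\infty)\times\Omega$. $L^2_V$: inner product $\langle f,g\rangle_{L^2_V}=\int_\Omega fgV^{p-1}dx$. The problem $-\Delta\varphi=\lambda V^{p-1}\varphi$, $\varphi=0$ on $\partial\Omega$ has distinct eigenvalues $\lambda_{V,1}<\lambda_{V,2}<\dots$ with eigenspaces of dimension $N_k$ and $L^2_V$-orthonormal bases $\{\phi_{k,j}\}_{j=1}^{N_k}$. $\mathsf{E}[f]=\int_\Omega f^2V^{p-1}dx$; $\mathcal{E}[v]=\int_\Omega[(v^{p+1}-V^{p+1})-\frac{p+1}{p}(v^p-V^p)V]dx$;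 linear Rayleigh quotient $\mathsf{Q}_{k,j}[\psi]=|\langle\psi,\phi_{k,j}\rangle_{L^2_V}|/\|\psi\|_{L^2_V}$; nonlinear quotient $\mathcal{Q}_{k,j}[v]=|\int_\Omega(v^p-V^p)\phi_{k,j}dx|/\mathcal{E}[v]^{1/2}$. *)

theory Defs
  imports "HOL-Analysis.Analysis"
begin

definition d2 :: "('a::euclidean_space \<Rightarrow> real) \<Rightarrow> 'a \<Rightarrow> 'a \<Rightarrow> 'a \<Rightarrow> real" where
  "d2 f b c x = frechet_derivative (\<lambda>y. frechet_derivative f (at y) b) (at x) c"

definition laplacian :: "('a::euclidean_space \<Rightarrow> real) \<Rightarrow> 'a \<Rightarrow> real" where
  "laplacian f x = (\<Sum>b\<in>Basis. d2 f b b x)"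

definition C2_on :: "'a::euclidean_space set \<Rightarrow> ('a \<Rightarrow> real) \<Rightarrow> bool" where
  "C2_on U f \<longleftrightarrow>
     (\<forall>x\<in>U. f differentiable (at x)) \<and>
     (\<forall>b\<in>Basis. \<forall>x\<in>U. (\<lambda>y. frechet_derivative f (at y) b) differentiable (at x)) \<and>
     (\<forall>b\<in>Basis. \<forall>c\<in>Basis. continuous_on U (d2 f b c))"

definition C2alpha_boundary :: "real \<Rightarrow> 'a::euclidean_space set \<Rightarrow> bool" where
  "C2alpha_boundary \<alpha> \<Omega> \<longleftrightarrow>
     (\<forall>z\<in>frontier \<Omega>. \<exists>r>0. \<exists>\<rho>.
        C2_on (ball z r) \<rho> \<and>
        (\<forall>b\<in>Basis. \<forall>c\<in>Basis. \<exists>L. \<forall>x\<in>ball z r. \<forall>y\<in>ball z r.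
            \<bar>d2 \<rho> b c x - d2 \<rho> b c y\<bar> \<le> L * dist x y powr \<alpha>) \<and>
        (\<forall>x\<in>ball z r. frechet_derivative \<rho> (at x) \<noteq> (\<lambda>_. 0)) \<and>
        \<Omega> \<inter> ball z r = {x\<in>ball z r. \<rho> x < 0})"

definition test_fun :: "'a::euclidean_space set \<Rightarrow> ('a \<Rightarrow> real) \<Rightarrow> bool" where
  "test_fun \<Omega> \<psi> \<longleftrightarrow> C2_on UNIV \<psi> \<and> (\<exists>K. compact K \<and> K \<subseteq> \<Omega> \<and> (\<forall>x. x \<notin> K \<longrightarrow> \<psi> x = 0))"

definition eigspace :: "'a::euclidean_space set \<Rightarrow> ('a \<Rightarrow> real) \<Rightarrow> real \<Rightarrow> real \<Rightarrow> ('a \<Rightarrow> real) set" where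
  "eigspace \<Omega> V p lam = {\<phi>. C2_on \<Omega> \<phi> \<and> continuous_on (closure \<Omega>) \<phi> \<and>
       (\<forall>x\<in>frontier \<Omega>. \<phi> x = 0) \<and>
       (\<forall>x\<in>\<Omega>. - laplacian \<phi> x = lam * V x powr (p - 1) * \<phi> x)}"

definition is_eigenvalue :: "'a::euclidean_space set \<Rightarrow> ('a \<Rightarrow> real) \<Rightarrow> real \<Rightarrow> real \<Rightarrow> bool" where
  "is_eigenvalue \<Omega> V p lam \<longleftrightarrow> (\<exists>\<phi>\<in>eigspace \<Omega> V p lam. \<exists>x\<in>\<Omega>. \<phi> x \<noteq> 0)"

definition L2V_inner :: "'a::euclidean_space set \<Rightarrow> ('a \<Rightarrow> real) \<Rightarrow> real \<Rightarrow> ('a \<Rightarrow> real) \<Rightarrow> ('a \<Rightarrow> real) \<Rightarrow> real" where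
  "L2V_inner \<Omega> V p f g = (\<integral>x. f x * g x * V x powr (p - 1) \<partial>lebesgue_on \<Omega>)"

definition L2V_norm :: "'a::euclidean_space set \<Rightarrow> ('a \<Rightarrow> real) \<Rightarrow> real \<Rightarrow> ('a \<Rightarrow> real) \<Rightarrow> real" where
  "L2V_norm \<Omega> V p f = sqrt (L2V_inner \<Omega> V p f f)"

definition linE :: "'a::euclidean_space set \<Rightarrow> ('a \<Rightarrow> real) \<Rightarrow> real \<Rightarrow> ('a \<Rightarrow> real) \<Rightarrow> real" where
  "linE \<Omega> V p f = (\<integral>x. (f x)\<^sup>2 * V x powr (p - 1) \<partial>lebesgue_on \<Omega>)"

definition nonlinE :: "'a::euclidean_space set \<Rightarrow> ('a \<Rightarrow> real) \<Rightarrow> real \<Rightarrow> ('a \<Rightarrow> real) \<Rightarrow> real" where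
  "nonlinE \<Omega> V p v = (\<integral>x. (v x powr (p + 1) - V x powr (p + 1))
       - (p + 1) / p * (v x powr p - V x powr p) * V x \<partial>lebesgue_on \<Omega>)"

definition linQ :: "'a::euclidean_space set \<Rightarrow> ('a \<Rightarrow> real) \<Rightarrow> real \<Rightarrow> ('a \<Rightarrow> real) \<Rightarrow> ('a \<Rightarrow> real) \<Rightarrow> real" where
  "linQ \<Omega> V p \<phi> \<psi> = \<bar>L2V_inner \<Omega> V p \<psi> \<phi>\<bar> / L2V_norm \<Omega> V p \<psi>"

definition nonlinQ :: "'a::euclidean_space set \<Rightarrow> ('a \<Rightarrow> real) \<Rightarrow> real \<Rightarrow> ('a \<Rightarrow> real) \<Rightarrow> ('a \<Rightarrow> real) \<Rightarrow> real" where
  "nonlinQ \<Omega> V p \<phi> v = \<bar>\<integral>x. (v x powr p - V x powr p) * \<phi> x \<partial>lebesgue_on \<Omega>\<bar>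
       / sqrt (nonlinE \<Omega> V p v)"

end

(* With f = v - V and |f| \<le> \<delta> V, Taylor's formula gives v^p - V^p = p V^(p-1) f + O(V^(p-1) f^2).
   Hence, as soon as an eigenfunction satisfies |\<phi>| \<le> C V, the numerator of the nonlinear
   quotient differs from p <f, \<phi>>_V by at most a multiple of E[f]; the assumed two-sided
   comparison of the energies converts E[f] into the nonlinear denominator, which yields both
   inequalities with an error of order E[f]^(1/2).

   The bound |\<phi>| \<le> C V is a Hopf-type comparison. Near a boundary point write \<Omega> locally as
   {\<rho> < 0}. For M large, both exp(-M (\<rho> + K |y - x|^2)) and exp(M (\<rho> - K |y - x|^2))
   are strictly subharmonic near the boundary, because the gradient of \<rho> does not vanish. The weak maximum principle then yields V \<ge> \<epsilon> (-\<rho>) for the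
   superharmonic V = S^m, and |\<phi>| \<le> A (-\<rho>) for \<phi>, whose Laplacian is bounded.
   In the interior both functions are trivially comparable, and compactness of the closure
   glues the local bounds. *)

theory Submission
  imports Defs
begin

section \<open>Twice differentiable functions and the weak maximum principle\<close>

lemma C2_on_subset: "C2_on U f \<Longrightarrow> D \<subseteq> U \<Longrightarrow> C2_on D f"
  unfolding C2_on_def by (meson continuous_on_subset subsetD)

lemma C2_on_has_derivative:
  assumes "C2_on U f" "y \<in> U"
  shows "(f has_derivative frechet_derivative f (at y)) (at y)"
    and "b \<in> Basis \<Longrightarrow> ((\<lambda>y. frechet_derivative f (at y) b) has_derivative
           frechet_derivative (\<lambda>y. frechet_derivative f (at y) b) (at y)) (at y)"
  using assms unfolding C2_on_def frechet_derivative_works by blast+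

lemma C2_on_continuous:
  assumes "C2_on U f" "open U"
  shows "continuous_on U f" "b \<in> Basis \<Longrightarrow> continuous_on U (\<lambda>y. frechet_derivative f (at y) b)"
    "continuous_on U (laplacian f)"
proof -
  show "continuous_on U f" "b \<in> Basis \<Longrightarrow> continuous_on U (\<lambda>y. frechet_derivative f (at y) b)"
    using assms unfolding C2_on_def
    by (meson differentiable_at_imp_differentiable_on differentiable_imp_continuous_on)+
  show "continuous_on U (laplacian f)"
    using assms unfolding C2_on_def laplacian_def[abs_def] by (intro continuous_on_sum) auto
qed

lemma second_derivative_nonpos_at_local_max:
  fixes g :: "'a::euclidean_space \<Rightarrow> real"
  assumes U: "open U" "x \<in> U" and max: "\<forall>y\<in>U. g y \<le> g x"
    and dg: "\<forall>y\<in>U. (g has_derivative Dg y) (at y)"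
    and dH: "((\<lambda>y. Dg y b) has_derivative H) (at x)"
  shows "H b \<le> 0"
proof (rule ccontr)
  assume "\<not> H b \<le> 0"
  hence Hb: "H b > 0" by simp
  define h where "h = (\<lambda>s. g (x + s *\<^sub>R b))"
  have line: "((\<lambda>s::real. x + s *\<^sub>R b) has_derivative (\<lambda>s. s *\<^sub>R b)) (at s)" for s
    by (auto intro!: derivative_eq_intros)
  have "\<forall>\<^sub>F s in at_right 0. x + s *\<^sub>R b \<in> U"
  proof -
    have "((\<lambda>s::real. x + s *\<^sub>R b) \<longlongrightarrow> x) (at_right 0)"
      by (auto intro!: tendsto_eq_intros)
    thus ?thesis using U by (rule topological_tendstoD)
  qed
  then obtain e where e: "e > 0" "\<And>s. 0 < s \<Longrightarrow> s < e \<Longrightarrow> x + s *\<^sub>R b \<in> U"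
    by (auto simp: eventually_at_right_field)
  have inU: "x + s *\<^sub>R b \<in> U" if "0 \<le> s" "s < e" for s
    using e(2)[of s] U(2) that by (cases "s = 0") auto
  have h': "DERIV h s :> Dg (x + s *\<^sub>R b) b" if "0 \<le> s" "s < e" for s
  proof -
    have dgs: "(g has_derivative Dg (x + s *\<^sub>R b)) (at (x + s *\<^sub>R b))" using dg inU[OF that] by blast
    from diff_chain_at[OF line dgs] show ?thesis
      using has_derivative_bounded_linear[OF dgs]
      by (simp add: h_def o_def has_field_derivative_def linear_scale bounded_linear.linear
          mult_commute_abs)
  qed
  have "DERIV (\<lambda>s. Dg (x + s *\<^sub>R b) b) 0 :> H b"
  proof -
    from diff_chain_at[OF line, of "\<lambda>y. Dg y b" H 0] dH
    have "((\<lambda>s. Dg (x + s *\<^sub>R b) b) has_derivative (\<lambda>s. H (s *\<^sub>R b))) (at 0)"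
      by (simp add: o_def)
    thus ?thesis using has_derivative_bounded_linear[OF dH]
      by (simp add: has_field_derivative_def linear_scale bounded_linear.linear mult_commute_abs)
  qed
  moreover have "Dg x b = 0"
    using differential_zero_maxmin[OF U(2,1) dg[rule_format, OF U(2)]] max by simp
  ultimately obtain d where d: "d > 0" "\<And>s. 0 < s \<Longrightarrow> s < d \<Longrightarrow> 0 < Dg (x + s *\<^sub>R b) b"
    using DERIV_pos_inc_right[OF _ Hb] by force
  define s1 where "s1 = min d e / 2"
  have s1: "0 < s1" "s1 < d" "s1 < e" using d e by (auto simp: s1_def)
  have "h 0 < h s1"
  proof (rule DERIV_pos_imp_increasing_open[OF s1(1)])
    show "\<exists>y. DERIV h s :> y \<and> y > 0" if "0 < s" "s < s1" for s
      using that s1 h' d(2) by force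
    show "continuous_on {0..s1} h"
      using s1 h' by (intro continuous_at_imp_continuous_on) (force intro: DERIV_isCont)
  qed
  thus False using max inU[of s1] s1 by (fastforce simp: h_def)
qed

lemma weak_maximum_principle:
  fixes g :: "'a::euclidean_space \<Rightarrow> real"
  assumes D: "open D" "bounded D" and gc: "continuous_on (closure D) g"
    and dg: "\<forall>y\<in>D. (g has_derivative Dg y) (at y)"
    and dH: "\<forall>y\<in>D. \<forall>b\<in>Basis. ((\<lambda>y. Dg y b) has_derivative H y b) (at y)"
    and subharmonic: "\<forall>y\<in>D. (\<Sum>b\<in>Basis. H y b b) > 0"
    and bd: "\<forall>y\<in>frontier D. g y \<le> 0"
  shows "\<forall>y\<in>D. g y \<le> 0"
proof (cases "D = {}")
  case False
  obtain x0 where x0: "x0 \<in> closure D" "\<forall>y\<in>closure D. g y \<le> g x0"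
    using continuous_attains_sup[OF _ _ gc] D(2) False by (auto simp: compact_closure)
  have "x0 \<notin> D"
  proof
    assume xD: "x0 \<in> D"
    have "\<forall>y\<in>D. g y \<le> g x0" using x0 closure_subset by blast
    hence "\<forall>b\<in>Basis. H x0 b b \<le> 0"
      using second_derivative_nonpos_at_local_max[OF D(1) xD _ dg] dH xD by blast
    thus False using subharmonic xD by (meson linorder_not_le sum_nonpos)
  qed
  hence "x0 \<in> frontier D" using x0(1) D(1) by (simp add: frontier_def interior_open)
  thus ?thesis using x0(2) bd closure_subset by fastforce
qed simp

section \<open>Exponential barriers in a boundary chart\<close>

definition quad_tilt :: "('a::real_inner \<Rightarrow> real) \<Rightarrow> real \<Rightarrow> 'a \<Rightarrow> 'a \<Rightarrow> real" where
  "quad_tilt \<rho> \<beta> x y = \<rho> y + \<beta> * ((y - x) \<bullet> (y - x))"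

lemma quad_tilt_self [simp]: "quad_tilt \<rho> \<beta> x x = \<rho> x"
  by (simp add: quad_tilt_def)

lemma quad_tilt_dist: "quad_tilt \<rho> \<beta> x y = \<rho> y + \<beta> * (dist x y)\<^sup>2"
  by (simp add: quad_tilt_def dist_norm power2_norm_eq_inner[symmetric] norm_minus_commute)

lemma continuous_on_quad_tilt: "continuous_on S \<rho> \<Longrightarrow> continuous_on S (quad_tilt \<rho> \<beta> x)"
  unfolding quad_tilt_def[abs_def] by (intro continuous_intros)

lemma has_derivative_exp_quad_tilt:
  fixes \<rho> :: "'a::euclidean_space \<Rightarrow> real"
  assumes "(\<rho> has_derivative D\<rho>) (at y)"
  shows "((\<lambda>y. exp (a * quad_tilt \<rho> \<beta> x y)) has_derivative
     (\<lambda>h. exp (a * quad_tilt \<rho> \<beta> x y) * (a * (D\<rho> h + 2 * \<beta> * ((y - x) \<bullet> h))))) (at y)"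
  unfolding quad_tilt_def
  by (rule derivative_eq_intros refl assms | simp)+ (auto simp: algebra_simps inner_commute)

(* For \<rho> of class C^2 this is the Laplacian of y \<mapsto> exp (a * quad_tilt \<rho> \<beta> x y). *)
definition exp_tilt_laplacian ::
    "('a::euclidean_space \<Rightarrow> real) \<Rightarrow> real \<Rightarrow> real \<Rightarrow> 'a \<Rightarrow> 'a \<Rightarrow> real" where
  "exp_tilt_laplacian \<rho> a \<beta> x y = exp (a * quad_tilt \<rho> \<beta> x y) *
     (a\<^sup>2 * (\<Sum>b\<in>Basis. (frechet_derivative \<rho> (at y) b + 2 * \<beta> * ((y - x) \<bullet> b))\<^sup>2)
      + a * (laplacian \<rho> y + 2 * \<beta> * real DIM('a)))"

lemma barrier_comparison:
  fixes F \<rho> :: "'a::euclidean_space \<Rightarrow> real"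
  assumes D: "open D" "bounded D" and C2: "C2_on D F" "C2_on D \<rho>"
    and cont: "continuous_on (closure D) F" "continuous_on (closure D) \<rho>"
    and subharmonic: "\<forall>y\<in>D. \<sigma> * laplacian F y + A * exp_tilt_laplacian \<rho> a \<beta> x y > 0"
    and bd: "\<forall>y\<in>frontier D. \<sigma> * F y + A * exp (a * quad_tilt \<rho> \<beta> x y) + \<kappa> \<le> 0"
  shows "\<forall>y\<in>D. \<sigma> * F y + A * exp (a * quad_tilt \<rho> \<beta> x y) + \<kappa> \<le> 0"
proof -
  define E where "E = (\<lambda>y. exp (a * quad_tilt \<rho> \<beta> x y))"
  define G where "G y h = a * (frechet_derivative \<rho> (at y) h + 2 * \<beta> * ((y - x) \<bullet> h))" for y h
  define DF where "DF y = frechet_derivative F (at y)" for y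
  define D2 where "D2 f y b = frechet_derivative (\<lambda>y. frechet_derivative f (at y) b) (at y)"
    for f :: "'a \<Rightarrow> real" and y b
  define Dg where "Dg y h = \<sigma> * DF y h + A * (E y * G y h)" for y h
  define H where "H y b c = \<sigma> * D2 F y b c
      + A * (E y * G y c * G y b + E y * (a * (D2 \<rho> y b c + 2 * \<beta> * (c \<bullet> b))))" for y b c
  have dE: "(E has_derivative (\<lambda>h. E y * G y h)) (at y)" if "y \<in> D" for y
    using has_derivative_exp_quad_tilt[OF C2_on_has_derivative(1)[OF C2(2) that]]
    by (simp add: E_def G_def fun_eq_iff)
  show ?thesis
  proof (rule weak_maximum_principle[where Dg = Dg and H = H])
    show "continuous_on (closure D) (\<lambda>y. \<sigma> * F y + A * exp (a * quad_tilt \<rho> \<beta> x y) + \<kappa>)"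
      by (intro continuous_intros continuous_on_quad_tilt cont)
    show "\<forall>y\<in>D. ((\<lambda>y. \<sigma> * F y + A * exp (a * quad_tilt \<rho> \<beta> x y) + \<kappa>) has_derivative Dg y) (at y)"
    proof
      fix y assume y: "y \<in> D"
      have "((\<lambda>y. \<sigma> * F y + A * E y) has_derivative Dg y) (at y)"
        unfolding Dg_def DF_def
        by (intro has_derivative_add has_derivative_mult_right dE[OF y]
            C2_on_has_derivative(1)[OF C2(1) y])
      thus "((\<lambda>y. \<sigma> * F y + A * exp (a * quad_tilt \<rho> \<beta> x y) + \<kappa>) has_derivative Dg y) (at y)"
        unfolding E_def by (rule has_derivative_add_const)
    qed
    show "\<forall>y\<in>D. \<forall>b\<in>Basis. ((\<lambda>y. Dg y b) has_derivative H y b) (at y)"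
    proof (intro ballI)
      fix y and b :: 'a assume y: "y \<in> D" and b: "b \<in> Basis"
      have dG: "((\<lambda>y. G y b) has_derivative (\<lambda>c. a * (D2 \<rho> y b c + 2 * \<beta> * (c \<bullet> b)))) (at y)"
        unfolding G_def D2_def
        by (rule derivative_eq_intros refl C2_on_has_derivative(2)[OF C2(2) y b] | simp)+
      have "((\<lambda>y. \<sigma> * DF y b + A * (E y * G y b)) has_derivative
          (\<lambda>c. \<sigma> * D2 F y b c + A * (E y * (a * (D2 \<rho> y b c + 2 * \<beta> * (c \<bullet> b)))
            + E y * G y c * G y b))) (at y)"
        unfolding DF_def D2_def
        by (intro has_derivative_add has_derivative_mult_right has_derivative_mult
            C2_on_has_derivative(2)[OF C2(1) y b] dE[OF y] dG[unfolded D2_def])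
      hence "((\<lambda>y. \<sigma> * DF y b + A * (E y * G y b)) has_derivative H y b) (at y)"
        by (rule has_derivative_eq_rhs) (simp add: H_def fun_eq_iff algebra_simps)
      thus "((\<lambda>y. Dg y b) has_derivative H y b) (at y)" by (simp add: Dg_def)
    qed
    show "\<forall>y\<in>D. (\<Sum>b\<in>Basis. H y b b) > 0"
    proof
      fix y assume "y \<in> D"
      let ?g = "\<lambda>b. frechet_derivative \<rho> (at y) b + 2 * \<beta> * ((y - x) \<bullet> b)"
      have "(\<Sum>b\<in>Basis. H y b b) = (\<Sum>b\<in>Basis. \<sigma> * D2 F y b b
          + A * E y * (a\<^sup>2 * (?g b)\<^sup>2 + a * D2 \<rho> y b b + a * (2 * \<beta>)))"
        by (rule sum.cong) (auto simp: H_def G_def power2_eq_square algebra_simps)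
      also have "\<dots> = \<sigma> * laplacian F y + A * exp_tilt_laplacian \<rho> a \<beta> x y"
        by (simp add: exp_tilt_laplacian_def laplacian_def d2_def D2_def E_def sum.distrib
            sum_distrib_left[symmetric] algebra_simps)
      finally have "(\<Sum>b\<in>Basis. H y b b) = \<sigma> * laplacian F y + A * exp_tilt_laplacian \<rho> a \<beta> x y" .
      thus "(\<Sum>b\<in>Basis. H y b b) > 0" using subharmonic \<open>y \<in> D\<close> by simp
    qed
  qed (use assms in auto)
qed

lemma linear_functional_eq_inner:
  fixes L :: "'a::euclidean_space \<Rightarrow> real"
  assumes "linear L"
  shows "L h = (\<Sum>b\<in>Basis. L b *\<^sub>R b) \<bullet> h"
  using Linear_Algebra.linear_componentwise[OF assms, of h 1]
  by (simp add: inner_sum_left mult.commute inner_commute[of h])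

lemma sum_Basis_square_eq_norm:
  fixes v :: "'a::euclidean_space"
  shows "(\<Sum>b\<in>Basis. (L b + v \<bullet> b)\<^sup>2) = (norm ((\<Sum>b\<in>Basis. L b *\<^sub>R b) + v))\<^sup>2"
proof -
  define u where "u = (\<Sum>b\<in>Basis. L b *\<^sub>R b) + v"
  have "(norm u)\<^sup>2 = (\<Sum>b\<in>Basis. (u \<bullet> b) * (u \<bullet> b))"
    by (simp add: power2_norm_eq_inner euclidean_inner[of u u])
  also have "\<dots> = (\<Sum>b\<in>Basis. (L b + v \<bullet> b)\<^sup>2)"
    by (rule sum.cong) (auto simp: u_def inner_add_left power2_eq_square)
  finally show ?thesis by (simp add: u_def)
qed

lemma gradient_norm_lower_bound:
  fixes \<rho> :: "'a::euclidean_space \<Rightarrow> real"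
  assumes r: "r > 0" and C2: "C2_on (ball z r) \<rho>"
    and grad: "\<forall>y\<in>ball z r. frechet_derivative \<rho> (at y) \<noteq> (\<lambda>_. 0)"
  obtains g0 where "g0 > 0"
    "\<And>y. y \<in> cball z (r/2) \<Longrightarrow> g0 \<le> norm (\<Sum>b\<in>Basis. frechet_derivative \<rho> (at y) b *\<^sub>R b)"
proof -
  define gr where "gr y = (\<Sum>b\<in>Basis. frechet_derivative \<rho> (at y) b *\<^sub>R b)" for y
  have Kc: "compact (cball z (r/2))" "cball z (r/2) \<subseteq> ball z r" "z \<in> cball z (r/2)" using r by auto
  have "continuous_on (ball z r) gr"
    unfolding gr_def[abs_def] using C2_on_continuous(2)[OF C2 open_ball]
    by (intro continuous_on_sum continuous_on_scaleR) auto
  then obtain y0 where y0: "y0 \<in> cball z (r/2)" "\<forall>y\<in>cball z (r/2). norm (gr y0) \<le> norm (gr y)"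
    using continuous_attains_inf[OF Kc(1) _ continuous_on_subset[OF continuous_on_norm Kc(2)]] Kc(3)
    by blast
  have "gr y0 \<noteq> 0"
  proof
    assume "gr y0 = 0"
    have "linear (frechet_derivative \<rho> (at y0))"
      using C2_on_has_derivative(1)[OF C2] y0(1) Kc(2) has_derivative_linear by blast
    hence "frechet_derivative \<rho> (at y0) h = gr y0 \<bullet> h" for h
      unfolding gr_def by (rule linear_functional_eq_inner)
    hence "frechet_derivative \<rho> (at y0) = (\<lambda>_. 0)" using \<open>gr y0 = 0\<close> by auto
    thus False using grad y0(1) Kc(2) by blast
  qed
  thus thesis using that[of "norm (gr y0)"] y0(2) by (simp add: gr_def)
qed

lemma quadratic_lower_bound:
  fixes a M S L :: real
  assumes a: "\<bar>a\<bar> = M" and M: "M > 0" and S: "1 + \<bar>L\<bar> \<le> M * S"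
  shows "M \<le> a\<^sup>2 * S + a * L"
proof -
  have "M \<le> M * (M * S - \<bar>L\<bar>)" using M S mult_left_mono[of 1 "M * S - \<bar>L\<bar>" M] by simp
  also have "\<dots> \<le> a\<^sup>2 * S + a * L"
  proof -
    have "a\<^sup>2 = M * M" using a by (metis power2_abs power2_eq_square)
    moreover have "- (M * \<bar>L\<bar>) \<le> a * L" using a abs_ge_minus_self[of "a * L"] by (simp add: abs_mult)
    ultimately show ?thesis by (simp add: right_diff_distrib)
  qed
  finally show ?thesis .
qed

lemma chart_barrier_constants:
  fixes \<rho> :: "'a::euclidean_space \<Rightarrow> real"
  assumes r: "r > 0" and C2: "C2_on (ball z r) \<rho>"
    and grad: "\<forall>y\<in>ball z r. frechet_derivative \<rho> (at y) \<noteq> (\<lambda>_. 0)"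
  obtains K M R where "K > 0" "M > 0" "\<And>y. y \<in> cball z (r/2) \<Longrightarrow> \<bar>\<rho> y\<bar> \<le> R"
    "\<And>x y a \<beta>. x \<in> ball z (r/4) \<Longrightarrow> y \<in> cball x (r/4) \<Longrightarrow> \<bar>a\<bar> = M \<Longrightarrow> \<bar>\<beta>\<bar> \<le> K \<Longrightarrow>
       M * exp (a * quad_tilt \<rho> \<beta> x y) \<le> exp_tilt_laplacian \<rho> a \<beta> x y"
proof -
  have Kc: "compact (cball z (r/2))" "cball z (r/2) \<subseteq> ball z r" using r by auto
  obtain g0 where g0: "g0 > 0"
    "\<And>y. y \<in> cball z (r/2) \<Longrightarrow> g0 \<le> norm (\<Sum>b\<in>Basis. frechet_derivative \<rho> (at y) b *\<^sub>R b)"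
    using gradient_norm_lower_bound[OF r C2 grad] by blast
  obtain R where R: "\<And>y. y \<in> cball z (r/2) \<Longrightarrow> \<bar>\<rho> y\<bar> \<le> R"
    using continuous_on_compact_bound[OF Kc(1) continuous_on_subset[OF
        C2_on_continuous(1)[OF C2 open_ball] Kc(2)]] by (metis real_norm_def)
  obtain L where L: "\<And>y. y \<in> cball z (r/2) \<Longrightarrow> \<bar>laplacian \<rho> y\<bar> \<le> L"
    using continuous_on_compact_bound[OF Kc(1) continuous_on_subset[OF
        C2_on_continuous(3)[OF C2 open_ball] Kc(2)]] by (metis real_norm_def)
  define K where "K = g0 / r"
  define n where "n = real DIM('a)"
  define M where "M = 4 * (\<bar>L\<bar> + 2 * K * n + 1) / g0\<^sup>2 + 1"
  have K: "K > 0" using g0 r by (simp add: K_def)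
  have M: "M > 0" "1 + (\<bar>L\<bar> + 2 * K * n) \<le> M * (g0 / 2)\<^sup>2"
  proof -
    have "4 * (\<bar>L\<bar> + 2 * K * n + 1) / g0\<^sup>2 \<ge> 0" using K by (simp add: n_def)
    thus "M > 0" by (simp add: M_def)
    have "M * (g0 / 2)\<^sup>2 = (\<bar>L\<bar> + 2 * K * n + 1) + g0\<^sup>2/4" using g0 by (simp add: M_def field_simps)
    thus "1 + (\<bar>L\<bar> + 2 * K * n) \<le> M * (g0 / 2)\<^sup>2" by simp
  qed
  show thesis
  proof (rule that[OF K M(1) R])
    fix x y a \<beta> assume x: "x \<in> ball z (r/4)" and y: "y \<in> cball x (r/4)"
      and a: "\<bar>a\<bar> = M" and \<beta>: "\<bar>\<beta>\<bar> \<le> K"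
    have yKc: "y \<in> cball z (r/2)" using x y dist_triangle[of z y x] by simp
    define S where "S = (\<Sum>b\<in>Basis. (frechet_derivative \<rho> (at y) b + 2 * \<beta> * ((y - x) \<bullet> b))\<^sup>2)"
    \<comment> \<open>the tilt moves the gradient by at most 2 K r/4 = g0/2\<close>
    have "norm ((2 * \<beta>) *\<^sub>R (y - x)) = 2 * \<bar>\<beta>\<bar> * dist x y"
      by (simp add: dist_norm norm_minus_commute abs_mult)
    also have "\<dots> \<le> 2 * K * (r/4)" using \<beta> y K by (intro mult_mono) auto
    finally have "norm ((2 * \<beta>) *\<^sub>R (y - x)) \<le> g0 / 2" using r by (simp add: K_def)
    hence "g0 / 2 \<le> norm ((\<Sum>b\<in>Basis. frechet_derivative \<rho> (at y) b *\<^sub>R b) + (2 * \<beta>) *\<^sub>R (y - x))"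
      using g0(2)[OF yKc] norm_triangle_ineq2[of "\<Sum>b\<in>Basis. frechet_derivative \<rho> (at y) b *\<^sub>R b"
          "- ((2 * \<beta>) *\<^sub>R (y - x))"] by simp
    hence "(g0 / 2)\<^sup>2 \<le> S"
      using sum_Basis_square_eq_norm[of "frechet_derivative \<rho> (at y)" "(2 * \<beta>) *\<^sub>R (y - x)"] g0(1)
      by (simp add: S_def power_mono mult.assoc)
    moreover have "\<bar>laplacian \<rho> y + 2 * \<beta> * n\<bar> \<le> \<bar>L\<bar> + 2 * K * n"
    proof -
      have "\<bar>2 * \<beta> * n\<bar> \<le> 2 * K * n" using \<beta> by (simp add: abs_mult n_def)
      thus ?thesis using L[OF yKc] abs_triangle_ineq[of "laplacian \<rho> y" "2 * \<beta> * n"] by linarith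
    qed
    ultimately have "1 + \<bar>laplacian \<rho> y + 2 * \<beta> * n\<bar> \<le> M * S"
      using M mult_left_mono[of "(g0 / 2)\<^sup>2" S M] by linarith
    from mult_left_mono[OF quadratic_lower_bound[OF a M(1) this], of "exp (a * quad_tilt \<rho> \<beta> x y)"]
    show "M * exp (a * quad_tilt \<rho> \<beta> x y) \<le> exp_tilt_laplacian \<rho> a \<beta> x y"
      by (simp add: exp_tilt_laplacian_def S_def n_def mult.commute)
  qed
qed

lemma mem_chart_iff:
  assumes "\<Omega> \<inter> B = {y\<in>B. \<rho> y < (0::real)}" "y \<in> B"
  shows "y \<in> \<Omega> \<longleftrightarrow> \<rho> y < 0"
  using assms by (auto simp: set_eq_iff)

lemma tilted_sublevel_domain:
  fixes \<rho> :: "'a::euclidean_space \<Rightarrow> real"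
  assumes r: "r > 0" and \<rho>c: "continuous_on (ball z r) \<rho>"
    and chart: "\<Omega> \<inter> ball z r = {y\<in>ball z r. \<rho> y < 0}"
    and \<beta>: "\<beta> \<ge> 0" and x: "x \<in> \<Omega>" "x \<in> ball z (r/4)"
  defines "D \<equiv> {y\<in>ball x (r/4). quad_tilt \<rho> \<beta> x y < 0}"
  shows "open D" "bounded D" "x \<in> D" "D \<subseteq> \<Omega>" "closure D \<subseteq> closure \<Omega> \<inter> cball x (r/4)"
    and "\<And>y. y \<in> frontier D \<Longrightarrow>
           quad_tilt \<rho> \<beta> x y \<le> 0 \<and> (dist x y = r/4 \<or> quad_tilt \<rho> \<beta> x y = 0)"
proof -
  have sub: "cball x (r/4) \<subseteq> ball z r"
    using x(2) r by (simp add: cball_subset_ball_iff dist_commute)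
  have \<psi>c: "continuous_on (cball x (r/4)) (quad_tilt \<rho> \<beta> x)"
    by (rule continuous_on_quad_tilt[OF continuous_on_subset[OF \<rho>c sub]])
  have "open (ball x (r/4) \<inter> quad_tilt \<rho> \<beta> x -` {..<0})"
    by (rule continuous_open_preimage[OF continuous_on_subset[OF \<psi>c ball_subset_cball]]) auto
  moreover have "ball x (r/4) \<inter> quad_tilt \<rho> \<beta> x -` {..<0} = D" by (auto simp: D_def)
  ultimately show "open D" by simp
  show "bounded D" by (rule bounded_subset[OF bounded_ball[of x "r/4"]]) (auto simp: D_def)
  show "D \<subseteq> \<Omega>"
  proof
    fix y assume y: "y \<in> D"
    hence "y \<in> ball x (r/4)" by (simp add: D_def)
    hence "y \<in> ball z r" using sub ball_subset_cball by blast
    moreover have "\<rho> y < 0"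
    proof -
      have "\<rho> y \<le> quad_tilt \<rho> \<beta> x y" using \<beta> by (simp add: quad_tilt_dist)
      thus ?thesis using y by (simp add: D_def)
    qed
    ultimately show "y \<in> \<Omega>" using mem_chart_iff[OF chart] by blast
  qed
  have "x \<in> ball z r" using x(2) r by simp
  hence "\<rho> x < 0" using mem_chart_iff[OF chart] x(1) by blast
  thus "x \<in> D" using r by (simp add: D_def)
  have "closed (cball x (r/4) \<inter> quad_tilt \<rho> \<beta> x -` {..0})"
    by (rule continuous_closed_preimage[OF \<psi>c]) auto
  moreover have "cball x (r/4) \<inter> quad_tilt \<rho> \<beta> x -` {..0} = {y\<in>cball x (r/4). quad_tilt \<rho> \<beta> x y \<le> 0}"
    by auto
  ultimately have "closed {y\<in>cball x (r/4). quad_tilt \<rho> \<beta> x y \<le> 0}" by simp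
  hence clD: "closure D \<subseteq> {y\<in>cball x (r/4). quad_tilt \<rho> \<beta> x y \<le> 0}"
    by (rule closure_minimal[rotated]) (auto simp: D_def)
  thus "closure D \<subseteq> closure \<Omega> \<inter> cball x (r/4)"
    using closure_mono[OF \<open>D \<subseteq> \<Omega>\<close>] by blast
  fix y assume "y \<in> frontier D"
  hence "y \<in> closure D" "y \<notin> D" using \<open>open D\<close> by (auto simp: frontier_def interior_open)
  moreover from \<open>y \<notin> D\<close> have "\<not> (dist x y < r/4 \<and> quad_tilt \<rho> \<beta> x y < 0)"
    by (simp add: D_def)
  ultimately show "quad_tilt \<rho> \<beta> x y \<le> 0 \<and> (dist x y = r/4 \<or> quad_tilt \<rho> \<beta> x y = 0)"
    using clD by fastforce
qed

lemma compact_pos_lower_bound: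
  fixes V :: "'a::topological_space \<Rightarrow> real"
  assumes "compact K" "K \<subseteq> \<Omega>" "continuous_on K V" "\<forall>y\<in>\<Omega>. V y > 0"
  obtains m0 where "m0 > 0" "\<forall>y\<in>K. m0 \<le> V y"
proof (cases "K = {}")
  case False
  then obtain y1 where "y1 \<in> K" "\<forall>y\<in>K. V y1 \<le> V y"
    using continuous_attains_inf[OF assms(1) _ assms(3)] by blast
  thus thesis using that[of "V y1"] assms(2,4) by blast
qed (use that[of 1] in simp)

lemma superharmonic_exp_barrier:
  fixes \<Omega> :: "'a::euclidean_space set" and V \<rho> :: "'a \<Rightarrow> real"
  assumes r: "r > 0" and \<rho>C2: "C2_on (ball z r) \<rho>"
    and chart: "\<Omega> \<inter> ball z r = {y\<in>ball z r. \<rho> y < 0}"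
    and Vc: "continuous_on (closure \<Omega>) V" and Vnn: "\<forall>y\<in>closure \<Omega>. V y \<ge> 0"
    and VC2: "C2_on \<Omega> V" and superharmonic: "\<forall>y\<in>\<Omega>. laplacian V y \<le> 0"
    and x: "x \<in> \<Omega>" "x \<in> ball z (r/4)" and K: "K \<ge> 0" and \<epsilon>: "\<epsilon> > 0"
    and lap: "\<forall>y\<in>cball x (r/4). exp_tilt_laplacian \<rho> (- M) K x y > 0"
    and sphere: "\<forall>y\<in>closure \<Omega>. dist x y = r/4 \<longrightarrow> \<rho> y \<le> - K * (r/4)\<^sup>2 \<longrightarrow>
      \<epsilon> * exp (- M * quad_tilt \<rho> K x y) \<le> V y"
  shows "\<epsilon> * (exp (- M * \<rho> x) - 1) \<le> V x"
proof -
  have \<rho>c: "continuous_on (ball z r) \<rho>" using C2_on_continuous(1)[OF \<rho>C2 open_ball] .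
  define D where "D = {y\<in>ball x (r/4). quad_tilt \<rho> K x y < 0}"
  note D = tilted_sublevel_domain[OF r \<rho>c chart K x, folded D_def]
  have "cball x (r/4) \<subseteq> ball z r" using x(2) r by (simp add: cball_subset_ball_iff dist_commute)
  hence "closure D \<subseteq> ball z r" using D(5) by blast
  have "\<forall>y\<in>D. (-1) * V y + \<epsilon> * exp (- M * quad_tilt \<rho> K x y) + (- \<epsilon>) \<le> 0"
  proof (rule barrier_comparison)
    show "C2_on D V" "C2_on D \<rho>"
      using C2_on_subset VC2 \<rho>C2 D(4) \<open>closure D \<subseteq> ball z r\<close> closure_subset by blast+
    show "continuous_on (closure D) V" "continuous_on (closure D) \<rho>"
      using continuous_on_subset Vc \<rho>c D(5) \<open>closure D \<subseteq> ball z r\<close> by blast+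
    show "\<forall>y\<in>D. 0 < (- 1) * laplacian V y + \<epsilon> * exp_tilt_laplacian \<rho> (- M) K x y"
    proof
      fix y assume y: "y \<in> D"
      hence "y \<in> cball x (r/4)" using D(5) closure_subset by blast
      hence "0 < \<epsilon> * exp_tilt_laplacian \<rho> (- M) K x y" using lap \<epsilon> by simp
      thus "0 < (- 1) * laplacian V y + \<epsilon> * exp_tilt_laplacian \<rho> (- M) K x y"
        using superharmonic y D(4) by force
    qed
    show "\<forall>y\<in>frontier D. (- 1) * V y + \<epsilon> * exp (- M * quad_tilt \<rho> K x y) + - \<epsilon> \<le> 0"
    proof
      fix y assume y: "y \<in> frontier D"
      have "y \<in> closure D" using y by (simp add: frontier_def)
      hence "y \<in> closure \<Omega>" using D(5) by blast
      consider "quad_tilt \<rho> K x y = 0" | "dist x y = r/4" "quad_tilt \<rho> K x y \<le> 0"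
        using D(6)[OF y] by blast
      thus "(- 1) * V y + \<epsilon> * exp (- M * quad_tilt \<rho> K x y) + - \<epsilon> \<le> 0"
      proof cases
        case 1 thus ?thesis using Vnn \<open>y \<in> closure \<Omega>\<close> by simp
      next
        case 2
        hence "\<rho> y \<le> - K * (r/4)\<^sup>2" by (simp only: quad_tilt_dist)
        hence "\<epsilon> * exp (- M * quad_tilt \<rho> K x y) \<le> V y" using sphere \<open>y \<in> closure \<Omega>\<close> 2(1) by blast
        thus ?thesis using \<epsilon> by simp
      qed
    qed
  qed (fact D(1,2))+
  hence "(-1) * V x + \<epsilon> * exp (- M * quad_tilt \<rho> K x x) + (- \<epsilon>) \<le> 0" using D(3) by blast
  thus ?thesis by (simp add: algebra_simps)
qed

lemma superharmonic_lower_bound_in_chart: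
  fixes \<Omega> :: "'a::euclidean_space set" and V \<rho> :: "'a \<Rightarrow> real"
  assumes r: "r > 0" and \<rho>C2: "C2_on (ball z r) \<rho>"
    and grad: "\<forall>y\<in>ball z r. frechet_derivative \<rho> (at y) \<noteq> (\<lambda>_. 0)"
    and chart: "\<Omega> \<inter> ball z r = {y\<in>ball z r. \<rho> y < 0}"
    and Vc: "continuous_on (closure \<Omega>) V" and Vpos: "\<forall>y\<in>\<Omega>. V y > 0"
    and VC2: "C2_on \<Omega> V" and superharmonic: "\<forall>y\<in>\<Omega>. laplacian V y \<le> 0"
  shows "\<exists>\<epsilon>>0. \<forall>x\<in>\<Omega> \<inter> ball z (r/4). \<epsilon> * (- \<rho> x) \<le> V x"
proof -
  obtain K M R where K: "K > 0" and M: "M > 0" and R: "\<And>y. y \<in> cball z (r/2) \<Longrightarrow> \<bar>\<rho> y\<bar> \<le> R"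
    and lap: "\<And>x y a \<beta>. x \<in> ball z (r/4) \<Longrightarrow> y \<in> cball x (r/4) \<Longrightarrow> \<bar>a\<bar> = M \<Longrightarrow> \<bar>\<beta>\<bar> \<le> K \<Longrightarrow>
      M * exp (a * quad_tilt \<rho> \<beta> x y) \<le> exp_tilt_laplacian \<rho> a \<beta> x y"
    using chart_barrier_constants[OF r \<rho>C2 grad] by blast
  define Kc where "Kc = cball z (r/2)"
  have Kc: "compact Kc" "Kc \<subseteq> ball z r" using r by (auto simp: Kc_def)
  define Ks where "Ks = Kc \<inter> \<rho> -` {..- K * (r/4)\<^sup>2}"
  have Ks\<Omega>: "Ks \<subseteq> \<Omega>"
  proof
    fix y assume "y \<in> Ks"
    moreover have "K * (r/4)\<^sup>2 > 0" using K r by simp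
    ultimately show "y \<in> \<Omega>" using mem_chart_iff[OF chart] Kc(2) by (auto simp: Ks_def)
  qed
  have "closed Ks" unfolding Ks_def
    by (rule continuous_closed_preimage[OF continuous_on_subset[OF
          C2_on_continuous(1)[OF \<rho>C2 open_ball] Kc(2)]]) (auto simp: Kc_def)
  hence "compact (Kc \<inter> Ks)" using compact_Int_closed[OF Kc(1)] by blast
  hence "compact Ks" by (simp add: Ks_def)
  moreover have "continuous_on Ks V" using Vc Ks\<Omega> closure_subset by (blast intro: continuous_on_subset)
  ultimately obtain m0 where m0: "m0 > 0" "\<forall>y\<in>Ks. m0 \<le> V y"
    using compact_pos_lower_bound[OF _ Ks\<Omega> _ Vpos] by blast
  define \<epsilon> where "\<epsilon> = m0 / exp (M * R)"
  have \<epsilon>: "\<epsilon> > 0" "\<epsilon> * exp (M * R) = m0" using m0 by (auto simp: \<epsilon>_def)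
  have Vnn: "\<forall>y\<in>closure \<Omega>. V y \<ge> 0"
    using continuous_ge_on_closure[OF Vc] Vpos by (metis less_imp_le)
  have barrier: "\<epsilon> * (exp (- M * \<rho> x) - 1) \<le> V x" if x: "x \<in> \<Omega>" "x \<in> ball z (r/4)" for x
  proof (rule superharmonic_exp_barrier[OF r \<rho>C2 chart Vc Vnn VC2 superharmonic x less_imp_le[OF K] \<epsilon>(1)])
    show "\<forall>y\<in>cball x (r/4). 0 < exp_tilt_laplacian \<rho> (- M) K x y"
      using lap[OF x(2), of _ "- M" K] M K by (smt (verit) exp_gt_zero mult_pos_pos)
    show "\<forall>y\<in>closure \<Omega>. dist x y = r/4 \<longrightarrow> \<rho> y \<le> - K * (r/4)\<^sup>2 \<longrightarrow>
      \<epsilon> * exp (- M * quad_tilt \<rho> K x y) \<le> V y"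
    proof (intro ballI impI)
      fix y assume y: "y \<in> closure \<Omega>" "dist x y = r/4" "\<rho> y \<le> - K * (r/4)\<^sup>2"
      have "y \<in> Kc" using x(2) y(2) dist_triangle[of z y x] by (simp add: Kc_def)
      hence "m0 \<le> V y" using m0 y(3) by (simp add: Ks_def)
      have "- quad_tilt \<rho> K x y \<le> R"
        using R[OF \<open>y \<in> Kc\<close>[unfolded Kc_def]] K y(2)
        by (simp add: quad_tilt_dist) (smt (verit) zero_le_power2 mult_nonneg_nonneg)
      hence "- M * quad_tilt \<rho> K x y \<le> M * R" using mult_left_mono[OF _ less_imp_le[OF M]] by force
      hence "\<epsilon> * exp (- M * quad_tilt \<rho> K x y) \<le> m0"
        using \<epsilon> by (metis exp_le_cancel_iff mult_left_mono less_imp_le)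
      thus "\<epsilon> * exp (- M * quad_tilt \<rho> K x y) \<le> V y" using \<open>m0 \<le> V y\<close> by simp
    qed
  qed
  show ?thesis
  proof (intro exI[of _ "\<epsilon> * M"] conjI ballI)
    fix x assume "x \<in> \<Omega> \<inter> ball z (r/4)"
    hence "\<epsilon> * (exp (- M * \<rho> x) - 1) \<le> V x" using barrier by blast
    have "M * (- \<rho> x) \<le> exp (- M * \<rho> x) - 1"
      using exp_ge_add_one_self[of "- M * \<rho> x"] by simp
    hence "\<epsilon> * (M * (- \<rho> x)) \<le> \<epsilon> * (exp (- M * \<rho> x) - 1)"
      by (rule mult_left_mono) (use \<epsilon>(1) in simp)
    also have "\<dots> \<le> V x" by fact
    finally show "(\<epsilon> * M) * (- \<rho> x) \<le> V x" by (simp only: mult.assoc)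
  qed (use \<epsilon> M in simp)
qed

lemma bounded_laplacian_exp_barrier:
  fixes \<Omega> :: "'a::euclidean_space set" and \<phi> \<rho> :: "'a \<Rightarrow> real"
  assumes \<Omega>: "open \<Omega>" and r: "r > 0" and \<rho>C2: "C2_on (ball z r) \<rho>"
    and chart: "\<Omega> \<inter> ball z r = {y\<in>ball z r. \<rho> y < 0}"
    and \<phi>c: "continuous_on (closure \<Omega>) \<phi>" and \<phi>C2: "C2_on \<Omega> \<phi>" and \<phi>0: "\<forall>y\<in>frontier \<Omega>. \<phi> y = 0"
    and s: "s = 1 \<or> s = -1" and lap\<phi>: "\<forall>y\<in>\<Omega>. - K0 \<le> s * laplacian \<phi> y"
    and x: "x \<in> \<Omega>" "x \<in> ball z (r/4)" and K: "K \<ge> 0" and M: "M \<ge> 0" and A: "A \<ge> 0"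
    and lap: "\<forall>y\<in>cball x (r/4). K0 < A * exp_tilt_laplacian \<rho> M (- K) x y"
    and sphere: "\<forall>y\<in>closure \<Omega>. dist x y = r/4 \<longrightarrow> \<rho> y \<le> 0 \<longrightarrow>
      s * \<phi> y + A * exp (M * quad_tilt \<rho> (- K) x y) \<le> A"
  shows "s * \<phi> x \<le> A * (1 - exp (M * \<rho> x))"
proof -
  have \<rho>c: "continuous_on (ball z r) \<rho>" using C2_on_continuous(1)[OF \<rho>C2 open_ball] .
  define D where "D = {y\<in>ball x (r/4). quad_tilt \<rho> 0 x y < 0}"
  note D = tilted_sublevel_domain[OF r \<rho>c chart order_refl x, folded D_def]
  have "cball x (r/4) \<subseteq> ball z r" using x(2) r by (simp add: cball_subset_ball_iff dist_commute)
  hence DU: "closure D \<subseteq> ball z r" using D(5) by blast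
  have "\<forall>y\<in>D. s * \<phi> y + A * exp (M * quad_tilt \<rho> (- K) x y) + (- A) \<le> 0"
  proof (rule barrier_comparison)
    show "C2_on D \<phi>" "C2_on D \<rho>" using C2_on_subset \<phi>C2 \<rho>C2 D(4) DU closure_subset by blast+
    show "continuous_on (closure D) \<phi>" "continuous_on (closure D) \<rho>"
      using continuous_on_subset \<phi>c \<rho>c D(5) DU by blast+
    show "\<forall>y\<in>D. 0 < s * laplacian \<phi> y + A * exp_tilt_laplacian \<rho> M (- K) x y"
    proof
      fix y assume y: "y \<in> D"
      hence "K0 < A * exp_tilt_laplacian \<rho> M (- K) x y" using lap D(5) closure_subset by blast
      thus "0 < s * laplacian \<phi> y + A * exp_tilt_laplacian \<rho> M (- K) x y"
        using lap\<phi> y D(4) by force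
    qed
    show "\<forall>y\<in>frontier D. s * \<phi> y + A * exp (M * quad_tilt \<rho> (- K) x y) + - A \<le> 0"
    proof
      fix y assume y: "y \<in> frontier D"
      have "y \<in> closure D" using y by (simp add: frontier_def)
      hence y\<Omega>: "y \<in> closure \<Omega>" "y \<in> ball z r" using D(5) DU by blast+
      consider "\<rho> y = 0" | "dist x y = r/4" "\<rho> y \<le> 0" using D(6)[OF y] by (auto simp: quad_tilt_def)
      thus "s * \<phi> y + A * exp (M * quad_tilt \<rho> (- K) x y) + - A \<le> 0"
      proof cases
        case 1
        hence "y \<notin> \<Omega>" using mem_chart_iff[OF chart y\<Omega>(2)] by simp
        hence "\<phi> y = 0" using \<phi>0 y\<Omega>(1) \<Omega> by (simp add: frontier_def interior_open)
        moreover have "M * quad_tilt \<rho> (- K) x y \<le> 0"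
          using 1 M K by (simp add: quad_tilt_dist mult_nonneg_nonneg mult_nonpos_nonneg)
        hence "A * exp (M * quad_tilt \<rho> (- K) x y) \<le> A" using A mult_left_mono[of _ 1 A] by simp
        ultimately show ?thesis by simp
      qed (use sphere y\<Omega>(1) in force)
    qed
  qed (fact D(1,2))+
  hence "s * \<phi> x + A * exp (M * quad_tilt \<rho> (- K) x x) + (- A) \<le> 0" using D(3) by blast
  thus ?thesis by (simp add: algebra_simps)
qed

lemma bounded_laplacian_upper_bound_in_chart:
  fixes \<Omega> :: "'a::euclidean_space set" and \<phi> \<rho> :: "'a \<Rightarrow> real"
  assumes \<Omega>: "open \<Omega>" and r: "r > 0" and \<rho>C2: "C2_on (ball z r) \<rho>"
    and grad: "\<forall>y\<in>ball z r. frechet_derivative \<rho> (at y) \<noteq> (\<lambda>_. 0)"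
    and chart: "\<Omega> \<inter> ball z r = {y\<in>ball z r. \<rho> y < 0}"
    and \<phi>c: "continuous_on (closure \<Omega>) \<phi>" and \<phi>C2: "C2_on \<Omega> \<phi>"
    and \<phi>0: "\<forall>y\<in>frontier \<Omega>. \<phi> y = 0" and lap\<phi>: "\<forall>y\<in>\<Omega>. \<bar>laplacian \<phi> y\<bar> \<le> K0"
  shows "\<exists>A\<ge>0. \<forall>x\<in>\<Omega> \<inter> ball z (r/4). \<bar>\<phi> x\<bar> \<le> A * (- \<rho> x)"
proof -
  obtain K M R where K: "K > 0" and M: "M > 0" and R: "\<And>y. y \<in> cball z (r/2) \<Longrightarrow> \<bar>\<rho> y\<bar> \<le> R"
    and lap: "\<And>x y a \<beta>. x \<in> ball z (r/4) \<Longrightarrow> y \<in> cball x (r/4) \<Longrightarrow> \<bar>a\<bar> = M \<Longrightarrow> \<bar>\<beta>\<bar> \<le> K \<Longrightarrow>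
      M * exp (a * quad_tilt \<rho> \<beta> x y) \<le> exp_tilt_laplacian \<rho> a \<beta> x y"
    using chart_barrier_constants[OF r \<rho>C2 grad] by blast
  define Kc where "Kc = cball z (r/2)"
  have Kc: "compact Kc" "Kc \<subseteq> ball z r" using r by (auto simp: Kc_def)
  have near: "cball x (r/4) \<subseteq> Kc" if "x \<in> ball z (r/4)" for x
    using that by (simp add: Kc_def cball_subset_cball_iff dist_commute)
  obtain \<Phi> where \<Phi>: "\<And>y. y \<in> closure \<Omega> \<inter> Kc \<Longrightarrow> \<bar>\<phi> y\<bar> \<le> \<Phi>"
    using continuous_on_compact_bound[OF closed_Int_compact[OF closed_closure Kc(1)]
        continuous_on_subset[OF \<phi>c]] by (metis Int_lower1 real_norm_def)
  define q where "q = exp (- (M * K * (r/4)\<^sup>2))"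
  have q: "q < 1" using M K r by (simp add: q_def)
  define e where "e = M * exp (- (M * (R + K * (r/4)\<^sup>2)))"
  have e: "e > 0" using M by (simp add: e_def)
  define A where "A = max 0 (max (\<Phi> / (1 - q)) ((K0 + 1) / e))"
  have A: "A \<ge> 0" "\<Phi> \<le> A * (1 - q)" "K0 + 1 \<le> A * e"
  proof -
    have "\<Phi> / (1 - q) \<le> A" "(K0 + 1) / e \<le> A" by (simp_all add: A_def)
    thus "\<Phi> \<le> A * (1 - q)" "K0 + 1 \<le> A * e" using q e by (simp_all add: pos_divide_le_eq)
  qed (simp add: A_def)
  have barrier: "s * \<phi> x \<le> A * (1 - exp (M * \<rho> x))"
    if x: "x \<in> \<Omega>" "x \<in> ball z (r/4)" and s: "s = 1 \<or> s = -1" for x s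
  proof (rule bounded_laplacian_exp_barrier[OF \<Omega> r \<rho>C2 chart \<phi>c \<phi>C2 \<phi>0 s _ x
        less_imp_le[OF K] less_imp_le[OF M] A(1)])
    show "\<forall>y\<in>\<Omega>. - K0 \<le> s * laplacian \<phi> y"
    proof
      fix y assume "y \<in> \<Omega>"
      hence "\<bar>laplacian \<phi> y\<bar> \<le> K0" using lap\<phi> by blast
      thus "- K0 \<le> s * laplacian \<phi> y" using s by (auto simp: abs_le_iff)
    qed
    show "\<forall>y\<in>cball x (r/4). K0 < A * exp_tilt_laplacian \<rho> M (- K) x y"
    proof
      fix y assume y: "y \<in> cball x (r/4)"
      have "K * (dist x y)\<^sup>2 \<le> K * (r/4)\<^sup>2"
        using y K r by (intro mult_left_mono power_mono) auto
      hence "- (R + K * (r/4)\<^sup>2) \<le> quad_tilt \<rho> (- K) x y"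
        using R[of y] near[OF x(2)] y by (force simp: quad_tilt_dist Kc_def)
      hence "M * (- (R + K * (r/4)\<^sup>2)) \<le> M * quad_tilt \<rho> (- K) x y"
        using M by (simp only: mult_le_cancel_left_pos)
      hence "exp (- (M * (R + K * (r/4)\<^sup>2))) \<le> exp (M * quad_tilt \<rho> (- K) x y)"
        by (simp only: mult_minus_right exp_le_cancel_iff)
      hence "e \<le> M * exp (M * quad_tilt \<rho> (- K) x y)" unfolding e_def using M by simp
      also have "\<dots> \<le> exp_tilt_laplacian \<rho> M (- K) x y" using lap[OF x(2) y, of M "- K"] K M by simp
      finally have "A * e \<le> A * exp_tilt_laplacian \<rho> M (- K) x y" using A(1) by (rule mult_left_mono)
      thus "K0 < A * exp_tilt_laplacian \<rho> M (- K) x y" using A(3) by linarith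
    qed
    show "\<forall>y\<in>closure \<Omega>. dist x y = r/4 \<longrightarrow> \<rho> y \<le> 0 \<longrightarrow>
      s * \<phi> y + A * exp (M * quad_tilt \<rho> (- K) x y) \<le> A"
    proof (intro ballI impI)
      fix y assume y: "y \<in> closure \<Omega>" "dist x y = r/4" "\<rho> y \<le> 0"
      have "quad_tilt \<rho> (- K) x y \<le> - (K * (r/4)\<^sup>2)" using y(3) by (simp add: quad_tilt_dist y(2))
      hence "M * quad_tilt \<rho> (- K) x y \<le> - (M * K * (r/4)\<^sup>2)"
        using mult_left_mono[OF _ less_imp_le[OF M]] by force
      hence "A * exp (M * quad_tilt \<rho> (- K) x y) \<le> A * q"
        using A(1) by (simp add: q_def mult_left_mono)
      moreover have "y \<in> Kc" using near[OF x(2)] y(2) by (simp add: subset_iff dist_commute)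
      hence "s * \<phi> y \<le> \<Phi>" using \<Phi>[of y] y(1) s by (auto simp: abs_le_iff)
      ultimately show "s * \<phi> y + A * exp (M * quad_tilt \<rho> (- K) x y) \<le> A"
        using A(2) by (simp add: algebra_simps)
    qed
  qed
  show ?thesis
  proof (intro exI[of _ "A * M"] conjI ballI)
    fix x assume "x \<in> \<Omega> \<inter> ball z (r/4)"
    hence "\<phi> x \<le> A * (1 - exp (M * \<rho> x))" "- \<phi> x \<le> A * (1 - exp (M * \<rho> x))"
      using barrier[of x 1] barrier[of x "-1"] by auto
    moreover have "1 - exp (M * \<rho> x) \<le> M * (- \<rho> x)"
      using exp_ge_add_one_self[of "M * \<rho> x"] by linarith
    hence "A * (1 - exp (M * \<rho> x)) \<le> A * (M * (- \<rho> x))"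
      by (rule mult_left_mono) (fact A(1))
    ultimately show "\<bar>\<phi> x\<bar> \<le> A * M * (- \<rho> x)" by (simp add: mult.assoc)
  qed (use A(1) M in simp)
qed

section \<open>Comparison of an eigenfunction with a superharmonic function\<close>

lemma compact_local_bounds_imp_bound:
  fixes f g :: "'a::metric_space \<Rightarrow> real"
  assumes S: "compact S" "\<Omega> \<subseteq> S" and g: "\<forall>x\<in>\<Omega>. g x \<ge> 0"
    and local: "\<forall>y\<in>S. \<exists>R>0. \<exists>C. \<forall>x\<in>\<Omega> \<inter> ball y R. \<bar>f x\<bar> \<le> C * g x"
  shows "\<exists>C\<ge>0. \<forall>x\<in>\<Omega>. \<bar>f x\<bar> \<le> C * g x"
proof -
  obtain R C where RC: "\<And>y. y \<in> S \<Longrightarrow> R y > 0 \<and> (\<forall>x\<in>\<Omega> \<inter> ball y (R y). \<bar>f x\<bar> \<le> C y * g x)"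
    using local by metis
  obtain F where F: "F \<subseteq> S" "finite F" "S \<subseteq> (\<Union>y\<in>F. ball y (R y))"
  proof (rule compactE_image[OF S(1), of S "\<lambda>y. ball y (R y)"])
    show "S \<subseteq> (\<Union>y\<in>S. ball y (R y))" using RC by force
  qed auto
  show ?thesis
  proof (intro exI[of _ "\<Sum>y\<in>F. \<bar>C y\<bar>"] conjI ballI)
    fix x assume x: "x \<in> \<Omega>"
    then obtain y where y: "y \<in> F" "x \<in> ball y (R y)" using F(3) S(2) by blast
    have "\<bar>f x\<bar> \<le> C y * g x" using RC[of y] y F(1) x by blast
    also have "\<dots> \<le> (\<Sum>y\<in>F. \<bar>C y\<bar>) * g x"
    proof (rule mult_right_mono)
      have "\<bar>C y\<bar> \<le> (\<Sum>y\<in>F. \<bar>C y\<bar>)" using y(1) F(2) by (intro member_le_sum) auto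
      thus "C y \<le> (\<Sum>y\<in>F. \<bar>C y\<bar>)" by linarith
    qed (use g x in blast)
    finally show "\<bar>f x\<bar> \<le> (\<Sum>y\<in>F. \<bar>C y\<bar>) * g x" .
  qed (simp add: sum_nonneg)
qed

lemma interior_local_bound:
  fixes V \<phi> :: "'a::metric_space \<Rightarrow> real"
  assumes Vc: "continuous_on \<Omega> V" and Vpos: "\<forall>x\<in>\<Omega>. V x > 0" and y: "y \<in> \<Omega>"
    and \<Phi>: "\<forall>x\<in>\<Omega>. \<bar>\<phi> x\<bar> \<le> \<Phi>"
  shows "\<exists>R>0. \<exists>C. \<forall>x\<in>\<Omega> \<inter> ball y R. \<bar>\<phi> x\<bar> \<le> C * V x"
proof -
  obtain d where d: "d > 0" "\<forall>x\<in>\<Omega>. dist x y < d \<longrightarrow> dist (V x) (V y) < V y / 2"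
    using Vc y Vpos unfolding continuous_on_iff by (metis half_gt_zero)
  have "\<bar>\<phi> x\<bar> \<le> 2 * \<Phi> / V y * V x" if x: "x \<in> \<Omega> \<inter> ball y d" for x
  proof -
    have "dist (V x) (V y) < V y / 2" using d x by (simp add: dist_commute)
    hence "V y / 2 \<le> V x" unfolding dist_real_def by linarith
    moreover have "\<Phi> \<ge> 0" using \<Phi> y by force
    ultimately have "\<Phi> \<le> 2 * \<Phi> / V y * V x" using Vpos y by (simp add: field_simps mult_left_mono)
    thus ?thesis using \<Phi> x by force
  qed
  thus ?thesis using d(1) by blast
qed

lemma boundary_local_bound:
  fixes \<Omega> :: "'a::euclidean_space set" and V \<phi> :: "'a \<Rightarrow> real"
  assumes \<Omega>: "open \<Omega>" "C2alpha_boundary \<alpha> \<Omega>" and z: "z \<in> frontier \<Omega>"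
    and V: "continuous_on (closure \<Omega>) V" "\<forall>y\<in>\<Omega>. V y > 0" "C2_on \<Omega> V" "\<forall>y\<in>\<Omega>. laplacian V y \<le> 0"
    and \<phi>: "continuous_on (closure \<Omega>) \<phi>" "C2_on \<Omega> \<phi>" "\<forall>y\<in>frontier \<Omega>. \<phi> y = 0"
      "\<forall>y\<in>\<Omega>. \<bar>laplacian \<phi> y\<bar> \<le> K0"
  shows "\<exists>R>0. \<exists>C. \<forall>x\<in>\<Omega> \<inter> ball z R. \<bar>\<phi> x\<bar> \<le> C * V x"
proof -
  obtain r \<rho> where r: "r > 0" "C2_on (ball z r) \<rho>"
      "\<forall>x\<in>ball z r. frechet_derivative \<rho> (at x) \<noteq> (\<lambda>_. 0)"
      "\<Omega> \<inter> ball z r = {x\<in>ball z r. \<rho> x < 0}"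
    using \<Omega>(2) z unfolding C2alpha_boundary_def by blast
  obtain \<epsilon> where \<epsilon>: "\<epsilon> > 0" "\<forall>x\<in>\<Omega> \<inter> ball z (r/4). \<epsilon> * (- \<rho> x) \<le> V x"
    using superharmonic_lower_bound_in_chart[OF r V] by blast
  obtain A where A: "A \<ge> 0" "\<forall>x\<in>\<Omega> \<inter> ball z (r/4). \<bar>\<phi> x\<bar> \<le> A * (- \<rho> x)"
    using bounded_laplacian_upper_bound_in_chart[OF \<Omega>(1) r \<phi>] by blast
  have "\<bar>\<phi> x\<bar> \<le> A / \<epsilon> * V x" if "x \<in> \<Omega> \<inter> ball z (r/4)" for x
  proof -
    have "\<bar>\<phi> x\<bar> \<le> A / \<epsilon> * (\<epsilon> * (- \<rho> x))" using A(2) that \<epsilon>(1) by simp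
    also have "\<dots> \<le> A / \<epsilon> * V x" using \<epsilon> A(1) that by (intro mult_left_mono) auto
    finally show ?thesis .
  qed
  thus ?thesis using r(1) by (metis zero_less_divide_iff zero_less_numeral)
qed

lemma hopf_comparison:
  fixes \<Omega> :: "'a::euclidean_space set" and V \<phi> :: "'a \<Rightarrow> real"
  assumes \<Omega>: "open \<Omega>" "bounded \<Omega>" "C2alpha_boundary \<alpha> \<Omega>"
    and V: "continuous_on (closure \<Omega>) V" "\<forall>y\<in>\<Omega>. V y > 0" "C2_on \<Omega> V" "\<forall>y\<in>\<Omega>. laplacian V y \<le> 0"
    and \<phi>: "continuous_on (closure \<Omega>) \<phi>" "C2_on \<Omega> \<phi>" "\<forall>y\<in>frontier \<Omega>. \<phi> y = 0"
      "\<forall>y\<in>\<Omega>. \<bar>laplacian \<phi> y\<bar> \<le> K0"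
  shows "\<exists>C\<ge>0. \<forall>x\<in>\<Omega>. \<bar>\<phi> x\<bar> \<le> C * V x"
proof (rule compact_local_bounds_imp_bound[OF compact_closure[THEN iffD2, OF \<Omega>(2)] closure_subset])
  show "\<forall>x\<in>\<Omega>. V x \<ge> 0" using V(2) by (simp add: less_imp_le)
  obtain \<Phi> where \<Phi>: "\<And>y. y \<in> closure \<Omega> \<Longrightarrow> \<bar>\<phi> y\<bar> \<le> \<Phi>"
    using continuous_on_compact_bound[OF compact_closure[THEN iffD2, OF \<Omega>(2)] \<phi>(1)]
    by (metis real_norm_def)
  show "\<forall>y\<in>closure \<Omega>. \<exists>R>0. \<exists>C. \<forall>x\<in>\<Omega> \<inter> ball y R. \<bar>\<phi> x\<bar> \<le> C * V x"
  proof
    fix y assume "y \<in> closure \<Omega>"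
    show "\<exists>R>0. \<exists>C. \<forall>x\<in>\<Omega> \<inter> ball y R. \<bar>\<phi> x\<bar> \<le> C * V x"
    proof (cases "y \<in> \<Omega>")
      case True
      show ?thesis
        by (rule interior_local_bound[OF continuous_on_subset[OF V(1) closure_subset] V(2) True])
          (use \<Phi> closure_subset in blast)
    next
      case False
      hence "y \<in> frontier \<Omega>" using \<open>y \<in> closure \<Omega>\<close> \<Omega>(1) by (simp add: frontier_def interior_open)
      thus ?thesis by (rule boundary_local_bound[OF \<Omega>(1,3) _ V \<phi>])
    qed
  qed
qed

section \<open>Linearization of the nonlinear quotient\<close>

definition powr_taylor_const :: "real \<Rightarrow> real" where
  "powr_taylor_const p = \<bar>p * (p - 1)\<bar> / 2 * ((1/2) powr (p - 2) + (3/2) powr (p - 2))"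

lemma powr_taylor_const_nonneg: "powr_taylor_const p \<ge> 0"
  by (simp add: powr_taylor_const_def)

lemma powr_taylor_remainder:
  fixes p y :: real
  assumes y: "1/2 \<le> y" "y \<le> 3/2"
  shows "\<bar>y powr p - 1 - p * (y - 1)\<bar> \<le> powr_taylor_const p * (y - 1)\<^sup>2"
proof (cases "y = 1")
  case False
  define diff where "diff n t = (if n = 0 then t powr p else if n = 1 then p * t powr (p - 1)
      else p * (p - 1) * t powr (p - 2))" for n :: nat and t :: real
  have "DERIV (diff m) t :> diff (Suc m) t" if "m < 2" "1/2 \<le> t" "t \<le> 3/2" for m t
  proof -
    have t: "t > 0" using that by simp
    have "DERIV (\<lambda>t. p * t powr (p - 1)) t :> p * ((p - 1) * t powr (p - 1 - 1))"
      by (intro DERIV_cmult has_real_derivative_powr t)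
    moreover have "m = 0 \<or> m = 1" using that by auto
    ultimately show ?thesis
      using has_real_derivative_powr[OF t, of p] by (auto simp: diff_def[abs_def] algebra_simps)
  qed
  then obtain t where t: "(if y < 1 then y < t \<and> t < 1 else 1 < t \<and> t < y)"
    "y powr p = (\<Sum>m<2. (diff m 1 / fact m) * (y - 1)^m) + (diff 2 t / fact 2) * (y - 1)^2"
    using Taylor[of 2 diff "\<lambda>t. t powr p" "1/2" "3/2" 1 y] y False
    by (auto simp: diff_def[abs_def])
  have tr: "1/2 \<le> t" "t \<le> 3/2" using t(1) y by (auto split: if_splits)
  have "t powr (p - 2) \<le> (1/2) powr (p - 2) + (3/2) powr (p - 2)"
  proof (cases "p - 2 \<ge> 0")
    case True
    hence "t powr (p - 2) \<le> (3/2) powr (p - 2)" using tr by (intro powr_mono2) auto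
    thus ?thesis by (smt (verit) powr_ge_zero)
  next
    case False
    hence "t powr (p - 2) \<le> (1/2) powr (p - 2)" using tr by (intro powr_mono2') auto
    thus ?thesis by (smt (verit) powr_ge_zero)
  qed
  moreover have eq: "y powr p - 1 - p * (y - 1) = p * (p - 1) * t powr (p - 2) / 2 * (y - 1)\<^sup>2"
    using t(2) by (simp add: diff_def eval_nat_numeral)
  have "\<bar>y powr p - 1 - p * (y - 1)\<bar> = \<bar>p * (p - 1)\<bar> / 2 * t powr (p - 2) * (y - 1)\<^sup>2"
    unfolding eq by (simp add: abs_mult)
  ultimately show ?thesis unfolding powr_taylor_const_def
    by (simp only:) (intro mult_right_mono mult_left_mono; simp)
qed simp

lemma powr_linearization_bound:
  fixes v V \<phi> \<delta> p C :: real
  assumes V: "V > 0" and close: "\<bar>v - V\<bar> \<le> \<delta> * V" and \<delta>: "\<delta> \<le> 1/2" and \<phi>: "\<bar>\<phi>\<bar> \<le> C * V"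
  shows "\<bar>(v powr p - V powr p) * \<phi> - p * ((v - V) * \<phi> * V powr (p - 1))\<bar>
     \<le> powr_taylor_const p * C * ((v - V)\<^sup>2 * V powr (p - 1))"
proof -
  define \<theta> where "\<theta> = v / V"
  have v: "v = \<theta> * V" using V by (simp add: \<theta>_def)
  have "v - V = (\<theta> - 1) * V" by (simp add: v algebra_simps)
  hence "\<bar>\<theta> - 1\<bar> * V \<le> \<delta> * V" using close V by (simp add: abs_mult)
  hence "\<bar>\<theta> - 1\<bar> \<le> 1/2" using V \<delta> by simp
  hence \<theta>: "1/2 \<le> \<theta>" "\<theta> \<le> 3/2" unfolding abs_le_iff by auto
  define W where "W = V powr (p - 1)"
  have VW: "V powr p = W * V" using V by (simp add: W_def powr_diff)
  have "(v powr p - V powr p) * \<phi> - p * ((v - V) * \<phi> * V powr (p - 1))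
       = \<phi> * (W * V) * (\<theta> powr p - 1 - p * (\<theta> - 1))"
    unfolding v powr_mult VW W_def[symmetric] by (simp add: algebra_simps)
  hence "\<bar>(v powr p - V powr p) * \<phi> - p * ((v - V) * \<phi> * V powr (p - 1))\<bar>
      = \<bar>\<phi>\<bar> * (W * V) * \<bar>\<theta> powr p - 1 - p * (\<theta> - 1)\<bar>"
    using V by (simp add: abs_mult W_def)
  also have "\<dots> \<le> (C * V) * (W * V) * (powr_taylor_const p * (\<theta> - 1)\<^sup>2)"
    using powr_taylor_remainder[OF \<theta>, of p] \<phi> V by (intro mult_mono) (auto simp: W_def)
  also have "\<dots> = powr_taylor_const p * C * ((v - V)\<^sup>2 * V powr (p - 1))"
    unfolding v W_def by (simp add: power2_eq_square algebra_simps)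
  finally show ?thesis .
qed

lemma integral_powr_linearization_bound:
  fixes \<Omega> :: "'a::euclidean_space set" and v V \<phi> :: "'a \<Rightarrow> real"
  assumes fin: "finite_measure (lebesgue_on \<Omega>)"
    and meas: "v \<in> borel_measurable (lebesgue_on \<Omega>)" "V \<in> borel_measurable (lebesgue_on \<Omega>)"
      "\<phi> \<in> borel_measurable (lebesgue_on \<Omega>)"
    and V: "\<forall>x\<in>\<Omega>. 0 < V x \<and> V x \<le> Vmax" and \<phi>: "\<forall>x\<in>\<Omega>. \<bar>\<phi> x\<bar> \<le> C * V x"
    and close: "AE x in lebesgue_on \<Omega>. \<bar>v x - V x\<bar> \<le> \<delta> * V x" and \<delta>: "\<delta> \<le> 1/2" and p: "p \<ge> 1"
  shows "\<bar>(\<integral>x. (v x powr p - V x powr p) * \<phi> x \<partial>lebesgue_on \<Omega>)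
           - p * (\<integral>x. (v x - V x) * \<phi> x * V x powr (p - 1) \<partial>lebesgue_on \<Omega>)\<bar>
         \<le> powr_taylor_const p * C * (\<integral>x. (v x - V x)\<^sup>2 * V x powr (p - 1) \<partial>lebesgue_on \<Omega>)"
proof -
  let ?M = "lebesgue_on \<Omega>"
  let ?g1 = "\<lambda>x. (v x powr p - V x powr p) * \<phi> x"
  let ?g2 = "\<lambda>x. (v x - V x) * \<phi> x * V x powr (p - 1)"
  let ?g3 = "\<lambda>x. (v x - V x)\<^sup>2 * V x powr (p - 1)"
  have good: "AE x in ?M. x \<in> \<Omega> \<and> \<bar>v x - V x\<bar> \<le> \<delta> * V x"
    using close AE_space by eventually_elim (simp add: space_restrict_space)
  have bounds: "\<bar>v x - V x\<bar> \<le> Vmax \<and> \<bar>V x powr (p - 1)\<bar> \<le> Vmax powr (p - 1)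
      \<and> \<bar>v x powr p - V x powr p\<bar> \<le> (2 * Vmax) powr p + Vmax powr p \<and> \<bar>\<phi> x\<bar> \<le> \<bar>C\<bar> * Vmax"
    if x: "x \<in> \<Omega>" "\<bar>v x - V x\<bar> \<le> \<delta> * V x" for x
  proof -
    have V0: "V x > 0" "V x \<le> Vmax" using V x by auto
    have "\<delta> * V x \<le> 1/2 * V x" using \<delta> V0 by (intro mult_right_mono) auto
    hence vV: "\<bar>v x - V x\<bar> \<le> V x / 2" using x(2) by simp
    have "0 \<le> v x" "v x \<le> 2 * Vmax" using vV V0 unfolding abs_le_iff by linarith+
    hence "v x powr p \<le> (2 * Vmax) powr p" "V x powr p \<le> Vmax powr p"
      using V0 p by (auto intro!: powr_mono2)
    hence "\<bar>v x powr p - V x powr p\<bar> \<le> (2 * Vmax) powr p + Vmax powr p"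
      by (simp add: abs_le_iff) (smt (verit) powr_ge_zero)
    moreover have "\<bar>\<phi> x\<bar> \<le> \<bar>C\<bar> * Vmax"
      using \<phi> x V0 by (smt (verit) abs_ge_self mult_mono mult_nonneg_nonneg abs_ge_zero)
    ultimately show ?thesis using vV V0 p by (simp add: powr_mono2)
  qed
  have measurable: "g \<in> borel_measurable ?M" if "g \<in> {?g1, ?g2, ?g3}" for g
    using that meas by (auto intro!: borel_measurable_times borel_measurable_diff powr_real_measurable
        borel_measurable_power measurable_const)
  define B1 where "B1 = ((2 * Vmax) powr p + Vmax powr p) * (\<bar>C\<bar> * Vmax)"
  define B2 where "B2 = Vmax * (\<bar>C\<bar> * Vmax) * Vmax powr (p - 1)"
  define B3 where "B3 = Vmax * Vmax * Vmax powr (p - 1)"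
  have "AE x in ?M. \<bar>?g1 x\<bar> \<le> B1 \<and> \<bar>?g2 x\<bar> \<le> B2 \<and> \<bar>?g3 x\<bar> \<le> B3"
    using good
  proof eventually_elim
    case (elim x)
    hence b: "\<bar>v x - V x\<bar> \<le> Vmax" "\<bar>V x powr (p - 1)\<bar> \<le> Vmax powr (p - 1)"
      "\<bar>v x powr p - V x powr p\<bar> \<le> (2 * Vmax) powr p + Vmax powr p" "\<bar>\<phi> x\<bar> \<le> \<bar>C\<bar> * Vmax"
      using bounds by blast+
    have "0 \<le> Vmax" using V elim by force
    with b show ?case
      unfolding B1_def B2_def B3_def power2_eq_square abs_mult by (intro conjI mult_mono) auto
  qed
  hence "AE x in ?M. \<bar>?g1 x\<bar> \<le> B1" "AE x in ?M. \<bar>?g2 x\<bar> \<le> B2" "AE x in ?M. \<bar>?g3 x\<bar> \<le> B3"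
    by (auto elim: eventually_mono)
  moreover have "integrable ?M g" if "g \<in> {?g1, ?g2, ?g3}" "AE x in ?M. \<bar>g x\<bar> \<le> B" for g B
    using finite_measure.integrable_const_bound[OF fin, of g B] measurable[OF that(1)] that(2) by simp
  ultimately have i1: "integrable ?M ?g1" and i2: "integrable ?M ?g2" and i3: "integrable ?M ?g3"
    by blast+
  have "\<bar>(\<integral>x. ?g1 x \<partial>?M) - p * (\<integral>x. ?g2 x \<partial>?M)\<bar> = \<bar>\<integral>x. ?g1 x - p * ?g2 x \<partial>?M\<bar>"
    using i1 i2 by simp
  also have "\<dots> \<le> (\<integral>x. \<bar>?g1 x - p * ?g2 x\<bar> \<partial>?M)"
    using integral_norm_bound[of ?M "\<lambda>x. ?g1 x - p * ?g2 x"] by simp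
  also have "\<dots> \<le> (\<integral>x. powr_taylor_const p * C * ?g3 x \<partial>?M)"
  proof (rule integral_mono_AE)
    show "AE x in ?M. \<bar>?g1 x - p * ?g2 x\<bar> \<le> powr_taylor_const p * C * ?g3 x"
      using good by eventually_elim (use powr_linearization_bound V \<phi> \<delta> in blast)
  qed (use i1 i2 i3 in auto)
  also have "\<dots> = powr_taylor_const p * C * (\<integral>x. ?g3 x \<partial>?M)" by simp
  finally show ?thesis .
qed

lemma ratio_sandwich_bounds:
  fixes s r N I p C c \<alpha> \<beta> :: real
  assumes s: "s > 0" and \<alpha>\<beta>: "0 < \<alpha>" "\<alpha> \<le> \<beta>" and r: "\<alpha> * s \<le> r" "r \<le> \<beta> * s"
    and p: "p > 0" and C: "C \<ge> 0" and NI: "\<bar>N - p * I\<bar> \<le> C * s\<^sup>2" and c: "C / \<alpha> \<le> c"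
  shows "p / \<beta> * (\<bar>I\<bar> / s) - c * s \<le> \<bar>N\<bar> / r" and "\<bar>N\<bar> / r \<le> p / \<alpha> * (\<bar>I\<bar> / s) + c * s"
proof -
  have r0: "r > 0" using s \<alpha>\<beta> r by (smt (verit) mult_pos_pos)
  have "\<bar>p * I\<bar> = p * \<bar>I\<bar>" using p by (simp add: abs_mult)
  hence upper: "\<bar>N\<bar> \<le> p * \<bar>I\<bar> + C * s\<^sup>2" and lower: "p * \<bar>I\<bar> - C * s\<^sup>2 \<le> \<bar>N\<bar>"
    using NI abs_triangle_ineq[of "p * I" "N - p * I"] abs_triangle_ineq[of N "p * I - N"]
      abs_minus_commute[of N "p * I"] by simp_all
  have "\<bar>N\<bar> / r \<le> \<bar>N\<bar> / (\<alpha> * s)" using r(1) r0 \<alpha>\<beta> s by (intro divide_left_mono) auto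
  also have "\<dots> \<le> (p * \<bar>I\<bar> + C * s\<^sup>2) / (\<alpha> * s)" using upper \<alpha>\<beta> s by (intro divide_right_mono) auto
  also have "\<dots> = p / \<alpha> * (\<bar>I\<bar> / s) + C / \<alpha> * s" using \<alpha>\<beta> s by (simp add: field_simps power2_eq_square)
  also have "\<dots> \<le> p / \<alpha> * (\<bar>I\<bar> / s) + c * s" using c s by (intro add_left_mono mult_right_mono) auto
  finally show "\<bar>N\<bar> / r \<le> p / \<alpha> * (\<bar>I\<bar> / s) + c * s" .
  have "C / \<beta> \<le> C / \<alpha>" using \<alpha>\<beta> C by (intro divide_left_mono) auto
  hence "C / \<beta> * s \<le> c * s" using c s by (intro mult_right_mono) auto
  hence "p / \<beta> * (\<bar>I\<bar> / s) - c * s \<le> (p * \<bar>I\<bar> - C * s\<^sup>2) / (\<beta> * s)"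
    using \<alpha>\<beta> s by (simp add: field_simps power2_eq_square)
  also have "\<dots> \<le> \<bar>N\<bar> / r"
  proof (cases "p * \<bar>I\<bar> - C * s\<^sup>2 \<le> 0")
    case True
    hence "(p * \<bar>I\<bar> - C * s\<^sup>2) / (\<beta> * s) \<le> 0" using \<alpha>\<beta> s by (simp add: divide_nonpos_pos)
    thus ?thesis using r0 by (smt (verit) divide_nonneg_pos abs_ge_zero)
  next
    case False
    have "(p * \<bar>I\<bar> - C * s\<^sup>2) / (\<beta> * s) \<le> (p * \<bar>I\<bar> - C * s\<^sup>2) / r"
      using False r(2) r0 by (intro divide_left_mono) auto
    also have "\<dots> \<le> \<bar>N\<bar> / r" using lower r0 by (intro divide_right_mono) auto
    finally show ?thesis .
  qed
  finally show "p / \<beta> * (\<bar>I\<bar> / s) - c * s \<le> \<bar>N\<bar> / r" .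
qed

lemma quotient_comparison:
  fixes E En N I p C a :: real
  assumes p: "p > 0" and a: "a \<ge> 1" and E: "E \<ge> 0" and C: "C \<ge> 0"
    and lo: "(p + 1) / (2 * a\<^sup>2) * E \<le> En" and up: "En \<le> (p + 1) / 2 * a\<^sup>2 * E"
    and NI: "\<bar>N - p * I\<bar> \<le> C * E"
  defines "c \<equiv> C * sqrt 2 * a / sqrt (p + 1) + 1"
  shows "sqrt 2 * p / (sqrt (p + 1) * a) * (\<bar>I\<bar> / sqrt E) - c * sqrt E \<le> \<bar>N\<bar> / sqrt En
       \<and> \<bar>N\<bar> / sqrt En \<le> sqrt 2 * p / sqrt (p + 1) * a * (\<bar>I\<bar> / sqrt E) + c * sqrt E"
proof (cases "E = 0")
  case True
  hence "En = 0" using lo up by simp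
  thus ?thesis using True by simp
next
  case False
  hence s: "sqrt E > 0" using E by simp
  define \<alpha> where "\<alpha> = sqrt (p + 1) / (sqrt 2 * a)"
  define \<beta> where "\<beta> = sqrt (p + 1) * a / sqrt 2"
  have \<alpha>: "\<alpha> > 0" using p a by (simp add: \<alpha>_def)
  have "sqrt (p + 1) / (sqrt 2 * a) \<le> sqrt (p + 1) / sqrt 2"
    using a p by (intro divide_left_mono) auto
  also have "\<dots> \<le> sqrt (p + 1) * a / sqrt 2"
    using a p by (intro divide_right_mono) auto
  finally have "\<alpha> \<le> \<beta>" by (simp add: \<alpha>_def \<beta>_def)
  have "sqrt (\<alpha>\<^sup>2 * E) \<le> sqrt En" "sqrt En \<le> sqrt (\<beta>\<^sup>2 * E)"
    using lo up p by (simp_all add: \<alpha>_def \<beta>_def power_divide power_mult_distrib)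
  hence r: "\<alpha> * sqrt E \<le> sqrt En" "sqrt En \<le> \<beta> * sqrt E"
    using \<alpha> \<open>\<alpha> \<le> \<beta>\<close> by (simp_all add: real_sqrt_mult)
  have "\<bar>N - p * I\<bar> \<le> C * (sqrt E)\<^sup>2" using NI E by simp
  moreover have "C / \<alpha> \<le> c" using p by (simp add: c_def \<alpha>_def field_simps)
  ultimately have "p / \<beta> * (\<bar>I\<bar> / sqrt E) - c * sqrt E \<le> \<bar>N\<bar> / sqrt En"
      "\<bar>N\<bar> / sqrt En \<le> p / \<alpha> * (\<bar>I\<bar> / sqrt E) + c * sqrt E"
    using ratio_sandwich_bounds[OF s \<alpha> \<open>\<alpha> \<le> \<beta>\<close> r p C] by blast+
  moreover have "p / \<beta> = sqrt 2 * p / (sqrt (p + 1) * a)" "p / \<alpha> = sqrt 2 * p / sqrt (p + 1) * a"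
    by (simp_all add: \<alpha>_def \<beta>_def)
  ultimately show ?thesis by simp
qed

lemma nonlinQ_linQ_comparison:
  fixes \<Omega> :: "'a::euclidean_space set" and V \<phi> v :: "'a \<Rightarrow> real"
  assumes \<Omega>: "open \<Omega>" "bounded \<Omega>"
    and V: "continuous_on (closure \<Omega>) V" "\<forall>x\<in>\<Omega>. V x > 0"
    and \<phi>: "continuous_on (closure \<Omega>) \<phi>" "\<forall>x\<in>\<Omega>. \<bar>\<phi> x\<bar> \<le> C * V x" and C: "C \<ge> 0"
    and v: "v \<in> borel_measurable (lebesgue_on \<Omega>)"
    and close: "AE x in lebesgue_on \<Omega>. \<bar>v x - V x\<bar> \<le> \<delta> * V x" and \<delta>: "\<delta> \<le> 1/2"
    and p: "p \<ge> 1" and a: "a \<ge> 1"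
    and energy: "(p + 1) / (2 * a\<^sup>2) * linE \<Omega> V p (\<lambda>x. v x - V x) \<le> nonlinE \<Omega> V p v"
      "nonlinE \<Omega> V p v \<le> (p + 1) / 2 * a\<^sup>2 * linE \<Omega> V p (\<lambda>x. v x - V x)"
  defines "c \<equiv> powr_taylor_const p * C * sqrt 2 * a / sqrt (p + 1) + 1"
  shows "sqrt 2 * p / (sqrt (p + 1) * a) * linQ \<Omega> V p \<phi> (\<lambda>x. v x - V x)
           - c * sqrt (linE \<Omega> V p (\<lambda>x. v x - V x)) \<le> nonlinQ \<Omega> V p \<phi> v" (is ?lower)
    and "nonlinQ \<Omega> V p \<phi> v \<le> sqrt 2 * p / sqrt (p + 1) * a * linQ \<Omega> V p \<phi> (\<lambda>x. v x - V x)
           + c * sqrt (linE \<Omega> V p (\<lambda>x. v x - V x))" (is ?upper)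
proof -
  have \<Omega>L: "\<Omega> \<in> lmeasurable" using lmeasurable_open[OF \<Omega>(2,1)] .
  have meas: "f \<in> borel_measurable (lebesgue_on \<Omega>)" if "continuous_on (closure \<Omega>) f" for f
    using continuous_imp_measurable_on_sets_lebesgue[OF continuous_on_subset[OF that closure_subset]]
      fmeasurableD[OF \<Omega>L] .
  obtain Vmax where "\<And>x. x \<in> closure \<Omega> \<Longrightarrow> norm (V x) \<le> Vmax"
    using continuous_on_compact_bound[OF compact_closure[THEN iffD2, OF \<Omega>(2)] V(1)] by blast
  hence Vb: "\<forall>x\<in>\<Omega>. 0 < V x \<and> V x \<le> Vmax" using V(2) closure_subset by force
  have "\<bar>(\<integral>x. (v x powr p - V x powr p) * \<phi> x \<partial>lebesgue_on \<Omega>)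
      - p * L2V_inner \<Omega> V p (\<lambda>x. v x - V x) \<phi>\<bar>
      \<le> powr_taylor_const p * C * linE \<Omega> V p (\<lambda>x. v x - V x)"
    using integral_powr_linearization_bound[OF finite_measure_lebesgue_on[OF \<Omega>L] v meas[OF V(1)]
        meas[OF \<phi>(1)] Vb \<phi>(2) close \<delta> p]
    by (simp add: L2V_inner_def linE_def)
  moreover have "linE \<Omega> V p (\<lambda>x. v x - V x) \<ge> 0"
    unfolding linE_def by (rule Bochner_Integration.integral_nonneg) simp
  ultimately have "?lower \<and> ?upper"
    using quotient_comparison[OF _ a _ _ energy] p C powr_taylor_const_nonneg[of p]
    by (simp add: linQ_def nonlinQ_def L2V_norm_def L2V_inner_def linE_def power2_eq_square c_def)
  thus ?lower ?upper by simp_all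
qed

lemma nonlinQ_linQ_comparison_uniform:
  fixes \<Omega> :: "'a::euclidean_space set" and V \<phi> :: "'a \<Rightarrow> real" and v :: "real \<Rightarrow> 'a \<Rightarrow> real"
  assumes \<Omega>: "open \<Omega>" "bounded \<Omega>"
    and V: "continuous_on (closure \<Omega>) V" "\<forall>x\<in>\<Omega>. V x > 0"
    and \<phi>: "continuous_on (closure \<Omega>) \<phi>" "\<exists>C\<ge>0. \<forall>x\<in>\<Omega>. \<bar>\<phi> x\<bar> \<le> C * V x"
    and \<delta>: "\<delta> \<le> 1/2" and p: "p \<ge> 1" and a: "a \<ge> 1"
    and v: "\<forall>t\<ge>t0. v t \<in> borel_measurable (lebesgue_on \<Omega>)"
    and close: "\<forall>t\<ge>t0. AE x in lebesgue_on \<Omega>. \<bar>v t x - V x\<bar> \<le> \<delta> * V x"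
    and energy: "\<forall>t\<ge>t0.
      (p + 1) / (2 * a\<^sup>2) * linE \<Omega> V p (\<lambda>x. v t x - V x) \<le> nonlinE \<Omega> V p (v t) \<and>
      nonlinE \<Omega> V p (v t) \<le> (p + 1) / 2 * a\<^sup>2 * linE \<Omega> V p (\<lambda>x. v t x - V x)"
  shows "\<exists>c>0. \<forall>t\<ge>t0.
      sqrt 2 * p / (sqrt (p + 1) * a) * linQ \<Omega> V p \<phi> (\<lambda>x. v t x - V x)
        - c * sqrt (linE \<Omega> V p (\<lambda>x. v t x - V x)) \<le> nonlinQ \<Omega> V p \<phi> (v t) \<and>
      nonlinQ \<Omega> V p \<phi> (v t)
        \<le> sqrt 2 * p / sqrt (p + 1) * a * linQ \<Omega> V p \<phi> (\<lambda>x. v t x - V x)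
          + c * sqrt (linE \<Omega> V p (\<lambda>x. v t x - V x))"
proof -
  obtain C where C: "C \<ge> 0" "\<forall>x\<in>\<Omega>. \<bar>\<phi> x\<bar> \<le> C * V x" using \<phi>(2) by blast
  have "0 \<le> powr_taylor_const p * C * sqrt 2 * a / sqrt (p + 1)"
    using C(1) a p powr_taylor_const_nonneg[of p] by (intro divide_nonneg_nonneg mult_nonneg_nonneg) auto
  thus ?thesis
    using nonlinQ_linQ_comparison[OF \<Omega> V \<phi>(1) C(2,1) _ _ \<delta> p a] v close energy
    by (intro exI[of _ "powr_taylor_const p * C * sqrt 2 * a / sqrt (p + 1) + 1"]) simp
qed

section \<open>The rescaled fast diffusion flow\<close>

lemma stationary_power_superharmonic:
  fixes S :: "'a::euclidean_space \<Rightarrow> real"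
  assumes S: "continuous_on (closure \<Omega>) S" "\<forall>x\<in>\<Omega>. S x > 0"
    and eq: "\<forall>x\<in>\<Omega>. - laplacian (\<lambda>y. S y powr m) x = c * S x" and "c > 0" "m > 0"
  shows "continuous_on (closure \<Omega>) (\<lambda>x. S x powr m)" "\<forall>x\<in>\<Omega>. S x powr m > 0"
    "\<forall>x\<in>\<Omega>. laplacian (\<lambda>y. S y powr m) x \<le> 0"
proof -
  have "\<forall>x\<in>closure \<Omega>. S x \<ge> 0"
    using continuous_ge_on_closure[OF S(1)] S(2) by (metis less_imp_le)
  thus "continuous_on (closure \<Omega>) (\<lambda>x. S x powr m)"
    by (intro continuous_on_powr'[OF S(1) continuous_on_const]) (use \<open>m > 0\<close> in auto)
  show "\<forall>x\<in>\<Omega>. S x powr m > 0" using S(2) by auto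
  show "\<forall>x\<in>\<Omega>. laplacian (\<lambda>y. S y powr m) x \<le> 0"
    using eq S(2) \<open>c > 0\<close> by (metis less_imp_le mult_pos_pos neg_0_le_iff_le)
qed

lemma eigenfunction_laplacian_bounded:
  fixes \<Omega> :: "'a::euclidean_space set" and V \<phi> :: "'a \<Rightarrow> real"
  assumes "bounded \<Omega>" "continuous_on (closure \<Omega>) V" "\<forall>x\<in>closure \<Omega>. V x \<ge> 0" "p > 1"
    and "\<phi> \<in> eigspace \<Omega> V p lam"
  shows "\<exists>K0. \<forall>y\<in>\<Omega>. \<bar>laplacian \<phi> y\<bar> \<le> K0"
proof -
  have "continuous_on (closure \<Omega>) (\<lambda>y. V y powr (p - 1))"
    by (rule continuous_on_powr'[OF assms(2) continuous_on_const]) (use assms in auto)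
  moreover have "continuous_on (closure \<Omega>) \<phi>" using assms(5) by (simp add: eigspace_def)
  ultimately have "continuous_on (closure \<Omega>) (\<lambda>y. lam * V y powr (p - 1) * \<phi> y)"
    by (rule continuous_on_mult[OF continuous_on_mult[OF continuous_on_const]])
  from continuous_on_compact_bound[OF compact_closure[THEN iffD2, OF assms(1)] this]
  obtain K0 where "\<And>y. y \<in> closure \<Omega> \<Longrightarrow> \<bar>lam * V y powr (p - 1) * \<phi> y\<bar> \<le> K0"
    unfolding real_norm_def by blast
  moreover have "\<forall>y\<in>\<Omega>. laplacian \<phi> y = - (lam * V y powr (p - 1) * \<phi> y)"
    using assms(5) by (auto simp: eigspace_def)
  ultimately have "\<bar>laplacian \<phi> y\<bar> \<le> K0" if "y \<in> \<Omega>" for y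
    using that closure_subset[of \<Omega>] by (simp add: subset_iff)
  thus ?thesis by blast
qed

lemma eigenfunction_le_mult_superharmonic:
  fixes \<Omega> :: "'a::euclidean_space set" and V \<phi> :: "'a \<Rightarrow> real"
  assumes \<Omega>: "open \<Omega>" "bounded \<Omega>" "C2alpha_boundary \<alpha> \<Omega>"
    and V: "continuous_on (closure \<Omega>) V" "\<forall>x\<in>\<Omega>. V x > 0" "C2_on \<Omega> V" "\<forall>x\<in>\<Omega>. laplacian V x \<le> 0"
    and p: "p > 1" and \<phi>: "\<phi> \<in> eigspace \<Omega> V p lam"
  shows "\<exists>C\<ge>0. \<forall>x\<in>\<Omega>. \<bar>\<phi> x\<bar> \<le> C * V x"
proof -
  have "\<forall>x\<in>closure \<Omega>. V x \<ge> 0"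
    using continuous_ge_on_closure[OF V(1)] V(2) by (metis less_imp_le)
  then obtain K0 where "\<forall>y\<in>\<Omega>. \<bar>laplacian \<phi> y\<bar> \<le> K0"
    using eigenfunction_laplacian_bounded[OF \<Omega>(2) V(1) _ p \<phi>] by blast
  moreover have "continuous_on (closure \<Omega>) \<phi>" "C2_on \<Omega> \<phi>" "\<forall>x\<in>frontier \<Omega>. \<phi> x = 0"
    using \<phi> by (auto simp: eigspace_def)
  ultimately show ?thesis by (intro hopf_comparison[OF \<Omega> V])
qed

theorem lemma3p4:
  fixes \<Omega> :: "'a::euclidean_space set"
    and \<alpha> m p q T c \<delta> cb t0 :: real
    and u0 S V :: "'a \<Rightarrow> real"
    and u w v :: "real \<Rightarrow> 'a \<Rightarrow> real"
    and lam :: "nat \<Rightarrow> real" and Nk :: "nat \<Rightarrow> nat"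
    and \<phi> :: "nat \<Rightarrow> nat \<Rightarrow> 'a \<Rightarrow> real"
  assumes dom: "open \<Omega>" "connected \<Omega>" "bounded \<Omega>" "\<Omega> \<noteq> {}"
    and bdry: "0 < \<alpha>" "\<alpha> < 1" "C2alpha_boundary \<alpha> \<Omega>"
    and m_range: "max 0 (real DIM('a) - 2) / (real DIM('a) + 2) < m" "m < 1"
    and p_def: "p = 1 / m"
    and q_cond: "q \<ge> 1" "m < (real DIM('a) - 2) / real DIM('a) \<longrightarrow> q > real DIM('a) * (1 - m) / 2"
    and u0_data: "\<forall>x\<in>\<Omega>. u0 x \<ge> 0" "u0 \<in> borel_measurable (lebesgue_on \<Omega>)"
                 "integrable (lebesgue_on \<Omega>) (\<lambda>x. \<bar>u0 x\<bar> powr q)"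
    and u_nonneg: "\<forall>\<tau>\<ge>0. \<forall>x\<in>\<Omega>. u \<tau> x \<ge> 0"
    and u_int: "\<forall>\<tau>\<ge>0. integrable (lebesgue_on \<Omega>) (u \<tau>)"
    and u_init: "u 0 = u0" "((\<lambda>\<tau>. \<integral>x. \<bar>u \<tau> x - u0 x\<bar> \<partial>lebesgue_on \<Omega>) \<longlongrightarrow> 0) (at_right 0)"
    and u_pde: "\<forall>\<psi> \<tau>1 \<tau>2. test_fun \<Omega> \<psi> \<longrightarrow> 0 < \<tau>1 \<longrightarrow> \<tau>1 \<le> \<tau>2 \<longrightarrow>
        (\<integral>x. u \<tau>2 x * \<psi> x \<partial>lebesgue_on \<Omega>) - (\<integral>x. u \<tau>1 x * \<psi> x \<partial>lebesgue_on \<Omega>)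
        = (LBINT \<tau>=\<tau>1..\<tau>2. (\<integral>x. u \<tau> x powr m * laplacian \<psi> x \<partial>lebesgue_on \<Omega>))"
    and u_bc: "\<forall>\<tau>>0. \<forall>z\<in>frontier \<Omega>. ((\<lambda>x. u \<tau> x powr m) \<longlongrightarrow> 0) (at z within \<Omega>)"
    and T_pos: "T > 0"
    and T_ext: "\<forall>\<tau>\<ge>T. AE x in lebesgue_on \<Omega>. u \<tau> x = 0"
               "\<forall>\<tau>. 0 \<le> \<tau> \<and> \<tau> < T \<longrightarrow> \<not> (AE x in lebesgue_on \<Omega>. u \<tau> x = 0)"
    and c_def: "c = 1 / ((1 - m) * T)"
    and w_def: "w = (\<lambda>t x. exp (c * t) * u (T - T * exp (- t / T)) x)"
    and v_def: "v = (\<lambda>t x. w t x powr m)"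
    and S_sol: "continuous_on (closure \<Omega>) S" "\<forall>x\<in>\<Omega>. S x > 0" "\<forall>x\<in>frontier \<Omega>. S x = 0"
               "C2_on \<Omega> (\<lambda>x. S x powr m)"
               "\<forall>x\<in>\<Omega>. - laplacian (\<lambda>y. S y powr m) x = c * S x"
    and w_conv: "\<forall>\<epsilon>>0. \<exists>t1. \<forall>t\<ge>t1. AE x in lebesgue_on \<Omega>. \<bar>w t x - S x\<bar> \<le> \<epsilon>"
    and V_def: "V = (\<lambda>x. S x powr m)"
    and eig_mono: "\<forall>k\<ge>1. lam k < lam (Suc k)"
    and eig_basis: "\<forall>k\<ge>1. Nk k \<ge> 1 \<and>
        (\<forall>j\<in>{1..Nk k}. \<phi> k j \<in> eigspace \<Omega> V p (lam k)) \<and>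
        (\<forall>i\<in>{1..Nk k}. \<forall>j\<in>{1..Nk k}. L2V_inner \<Omega> V p (\<phi> k i) (\<phi> k j) = (if i = j then 1 else 0)) \<and>
        (\<forall>\<psi>\<in>eigspace \<Omega> V p (lam k). \<exists>a::nat \<Rightarrow> real. \<forall>x\<in>\<Omega>. \<psi> x = (\<Sum>j=1..Nk k. a j * \<phi> k j x))"
    and eig_all: "\<forall>\<mu>. is_eigenvalue \<Omega> V p \<mu> \<longrightarrow> (\<exists>k\<ge>1. \<mu> = lam k)"
    and delta: "0 < \<delta>" "\<delta> < 1 / (2 * p)"
    and t0: "t0 \<ge> 0"
    and H1': "\<forall>t\<ge>t0. AE x in lebesgue_on \<Omega>. \<bar>v t x - V x\<bar> \<le> \<delta> * V x"
    and cb_pos: "cb > 0"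
    and energy_cmp: "\<forall>t\<ge>t0.
        (p + 1) / (2 * (1 + cb * \<delta>)\<^sup>2) * linE \<Omega> V p (\<lambda>x. v t x - V x) \<le> nonlinE \<Omega> V p (v t) \<and>
        nonlinE \<Omega> V p (v t) \<le> (p + 1) / 2 * (1 + cb * \<delta>)\<^sup>2 * linE \<Omega> V p (\<lambda>x. v t x - V x)"
  shows "\<forall>k\<ge>1. \<forall>j\<in>{1..Nk k}. \<exists>ct>0. \<forall>t\<ge>t0.
        sqrt 2 * p / (sqrt (p + 1) * (1 + cb * \<delta>)) * linQ \<Omega> V p (\<phi> k j) (\<lambda>x. v t x - V x)
          - ct * sqrt (linE \<Omega> V p (\<lambda>x. v t x - V x))
        \<le> nonlinQ \<Omega> V p (\<phi> k j) (v t) \<and>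
        nonlinQ \<Omega> V p (\<phi> k j) (v t)
        \<le> sqrt 2 * p / sqrt (p + 1) * (1 + cb * \<delta>) * linQ \<Omega> V p (\<phi> k j) (\<lambda>x. v t x - V x)
          + ct * sqrt (linE \<Omega> V p (\<lambda>x. v t x - V x))"
proof -
  have m: "m > 0" using m_range(1) by (smt (verit) divide_nonneg_nonneg of_nat_0_le_iff max.cobounded1)
  hence p: "p > 1" using m_range(2) by (simp add: p_def)
  have "c > 0" using m_range(2) T_pos by (simp add: c_def)
  note V = stationary_power_superharmonic[OF S_sol(1,2,5) \<open>c > 0\<close> m, folded V_def]
  have Vpos: "\<forall>x\<in>\<Omega>. V x > 0" using V(2) by (simp add: V_def)
  have bound: "\<exists>C\<ge>0. \<forall>x\<in>\<Omega>. \<bar>\<phi> k j x\<bar> \<le> C * V x"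
    and cont: "continuous_on (closure \<Omega>) (\<phi> k j)" if "k \<ge> 1" "j \<in> {1..Nk k}" for k j
  proof -
    have eig: "\<phi> k j \<in> eigspace \<Omega> V p (lam k)" using eig_basis that by auto
    thus "\<exists>C\<ge>0. \<forall>x\<in>\<Omega>. \<bar>\<phi> k j x\<bar> \<le> C * V x"
      by (rule eigenfunction_le_mult_superharmonic[OF dom(1,3) bdry(3) V(1) Vpos
            S_sol(4)[folded V_def] V(3) p])
    show "continuous_on (closure \<Omega>) (\<phi> k j)" using eig by (simp add: eigspace_def)
  qed
  have "v t \<in> borel_measurable (lebesgue_on \<Omega>)" if "t0 \<le> t" for t
  proof -
    have "0 \<le> T - T * exp (- t / T)" using that t0 T_pos by (simp add: mult_left_le)
    hence "u (T - T * exp (- t / T)) \<in> borel_measurable (lebesgue_on \<Omega>)"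
      using u_int by (blast intro: borel_measurable_integrable)
    thus ?thesis unfolding v_def w_def by measurable
  qed
  moreover have "\<delta> \<le> 1/2" using delta p by (smt (verit) le_divide_eq_1_pos frac_le)
  moreover have "1 + cb * \<delta> \<ge> 1" using cb_pos delta(1) by simp
  ultimately show ?thesis
    by (intro allI impI ballI nonlinQ_linQ_comparison_uniform[OF dom(1,3) V(1) Vpos cont bound _
          less_imp_le[OF p] _ _ H1' energy_cmp]) auto
qed

end
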